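(* Assume the step size satisfies $$0<\alpha<\min\Big\{\frac{1+\lambda_{\min}(W)}{L_f},\ \frac{2}{L_f+m_f}\Big\},$$ and suppose there is $\sigma\in[0,\infty)$ with $\|\mathbf{x}^*(t_{k+1})-\mathbf{x}^*(t_k)\|\le\sigma$ and $\|\tilde{\mathbf{x}}(t_{k+1})-\tilde{\mathbf{x}}(t_k)\|\le\sigma$ for all $k\in\mathbb{N}$, and that $\sigma' := \sup_{k\in\mathbb{N}}\|(I-W)\tilde{\mathbf{x}}(t_k)\|<\infty$. Consider the online inexact DPGM with $M_o\ge1$ inner steps: given $\mathbf{x}(t_k)\in\mathbb{R}^N$, set $\mathbf{x}^0=\mathbf{x}(t_k)$ and for $\ell=0,\dots,M_o-1$ $$\mathbf{x}^{\ell+1} = \operatorname{prox}_{\alpha g(\cdot;t_{k+1})}\big(W\mathbf{x}^\ell - \alpha\nabla f(\mathbf{x}^\ell;t_{k+1})\big) + \mathbf{e}^\ell,$$ where the $\mathbf{e}^\ell$ (which may depend on $k$) are random vectors with $\mathbb{E}[\|\mathbf{e}^\ell\|]\le\eta$; then set $\mathbf{x}(t_{k+1}) = \mathbf{x}^{M_o}$. Define $$d(t_k) := \big[\|\bar{\mathbf{x}}(t_k)-\mathbf{x}^*(t_k)\|,\ \|\mathbf{x}(t_k)-\bar{\mathbf{x}}(t_k)\|,\ \|\mathbf{x}(t_k)-\tilde{\mathbf{x}}(t_k)\|\big]^\top,$$ $$b'' := \sum_{\ell=0}^{M_o-1} A^{M_o-\ell-1}\Big(\begin{bmatrix}2\alpha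 L_g\\ 2\alpha L_g+\sigma'\\0\end{bmatrix} + \eta\mathbf{1}_3\Big) + A^{M_o}\begin{bmatrix}\sigma\\0\\\sigma\end{bmatrix}.$$ Then, whenever the expectations are finite, for every $k$, entrywise, $$\mathbb{E}[d(t_{k+1})]\le A^{M_o}\,\mathbb{E}[d(t_k)] + b'',\qquad \mathbb{E}[\|\mathbf{x}(t_{k+1})-\mathbf{x}^*(t_{k+1})\|]\le[1\ 1\ 0]\,\mathbb{E}[d(t_{k+1})],$$ and $A^{M_o}$ has all eigenvalues strictly inside the unit circle (so the tracking error converges R-linearly to a neighborhood of the optimal trajectory).
   Context: $N\ge2$ agents over a fixed undirected connected graph $\mathcal{G}=(\mathcal{V},\mathcal{E})$. $W\in\mathbb{R}^{N\times N}$ is a symmetric doubly stochastic matrix (nonnegative entries, rows and columns summing to $1$) with $w_{ij}=0$ for $i\ne j$, $(i,j)\notin\mathcal{E}$, and $\rho(W):=\|W-\tfrac1N\mathbf{1}\mathbf{1}^\top\|\in(0,1)$; $\lambda_{\min}(W)$ its smallest eigenvalue; $I$ the identity. For each $k\in\mathbb{N}$ (time $t_k$) and each $i$: $f_i(\cdot;t_k):\mathbb{R}\to\mathbb{R}$ is $L_{f_i}$-smooth and $m_{f_i}$-strongly convex and $g_i(\cdot;t_k):\mathbb{R}\to\mathbb{R}$ is closed, convex, proper and Lipschitz, with constants independent of $k$; $f(\mathbf{x};t_k)=\sum_i f_i(x_i;t_k)$, $g(\mathbf{x};t_k)=\sum_i g_i(x_i;t_k)$; $L_f=\max_iL_{f_i}$,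 $m_f=\min_im_{f_i}$, and $L_g\ge0$ is a constant such that each $g(\cdot;t_k)$ is $L_g$-Lipschitz on $\mathbb{R}^N$ (Euclidean norm). $x^*(t_k)$ is the unique minimizer of $\sum_i(f_i(\cdot;t_k)+g_i(\cdot;t_k))$ over $\mathbb{R}$ and $\mathbf{x}^*(t_k)=x^*(t_k)\mathbf{1}$. $\varphi_\alpha(\mathbf{x};t_k)=\tfrac12\mathbf{x}^\top(I-W)\mathbf{x}+\alpha f(\mathbf{x};t_k)$ and $\tilde{\mathbf{x}}(t_k)=\arg\min_{\mathbf{x}\in\mathbb{R}^N}\{\varphi_\alpha(\mathbf{x};t_k)+\alpha g(\mathbf{x};t_k)\}$. $\bar{\mathbf{x}}(t_k)=\tfrac1N\mathbf{1}\mathbf{1}^\top\mathbf{x}(t_k)$. $A := \begin{bmatrix} c & \alpha L_f & 0\\ 0&\rho(W)&\alpha L_f\\0&0&\zeta_\varphi\end{bmatrix}$ with $c=\sqrt{1-2\alpha m_fL_f/(m_f+L_f)}$, $\zeta_\varphi=\max\{|1-L_\varphi|,|1-m_\varphi|\}$, $L_\varphi=1-\lambda_{\min}(W)+\alpha L_f$, $m_\varphi=\alpha m_f$. $\mathbf{1}_3$ is the all-ones vector of $\mathbb{R}^3$. $\operatorname{prox}_{\alpha h}(\mathbf{y})=\arg\min_{\mathbf{x}}\{h(\mathbf{x})+\tfrac{1}{2\alpha}\|\mathbf{x}-\mathbf{y}\|^2\}$. Vector inequalities are entrywise. *)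

theory Defs
  imports "HOL-Analysis.Analysis" "HOL-Probability.Probability"
begin

definition avg_mat :: "real^'n^'n" where
  "avg_mat = (\<chi> i j. 1 / real CARD('n))"

definition rhoW :: "real^'n^'n \<Rightarrow> real" where
  "rhoW W = onorm (\<lambda>x. (W - avg_mat) *v x)"

definition lambda_min :: "real^'n^'n \<Rightarrow> real" where
  "lambda_min W = Min {l. \<exists>v. v \<noteq> 0 \<and> W *v v = l *s v}"

primrec mpow :: "real^'m^'m \<Rightarrow> nat \<Rightarrow> real^'m^'m" where
  "mpow A 0 = mat 1"
| "mpow A (Suc n) = A ** mpow A n"

definition prox :: "(real^'n \<Rightarrow> real) \<Rightarrow> real \<Rightarrow> real^'n \<Rightarrow> real^'n" where
  "prox h \<alpha> y = (THE x. \<forall>z. h x + (norm (x - y))\<^sup>2 / (2 * \<alpha>) \<le> h z + (norm (z - y))\<^sup>2 / (2 * \<alpha>))"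

section \<open>Problem data (f, g indexed by time step k and agent i)\<close>

definition fsum :: "(nat \<Rightarrow> 'n \<Rightarrow> real \<Rightarrow> real) \<Rightarrow> nat \<Rightarrow> real^'n \<Rightarrow> real" where
  "fsum f k x = (\<Sum>i\<in>UNIV. f k i (x $ i))"

definition gsum :: "(nat \<Rightarrow> 'n \<Rightarrow> real \<Rightarrow> real) \<Rightarrow> nat \<Rightarrow> real^'n \<Rightarrow> real" where
  "gsum g k x = (\<Sum>i\<in>UNIV. g k i (x $ i))"

definition gradf :: "(nat \<Rightarrow> 'n \<Rightarrow> real \<Rightarrow> real) \<Rightarrow> nat \<Rightarrow> real^'n \<Rightarrow> real^'n" where
  "gradf f k x = (\<chi> i. deriv (f k i) (x $ i))"

definition xstar :: "(nat \<Rightarrow> 'n::finite \<Rightarrow> real \<Rightarrow> real) \<Rightarrow> (nat \<Rightarrow> 'n \<Rightarrow> real \<Rightarrow> real) \<Rightarrow> nat \<Rightarrow> real" where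
  "xstar f g k = (THE x. \<forall>y. (\<Sum>i\<in>UNIV. f k i x + g k i x) \<le> (\<Sum>i\<in>UNIV. f k i y + g k i y))"

definition xstar_vec :: "(nat \<Rightarrow> 'n::finite \<Rightarrow> real \<Rightarrow> real) \<Rightarrow> (nat \<Rightarrow> 'n \<Rightarrow> real \<Rightarrow> real) \<Rightarrow> nat \<Rightarrow> real^'n" where
  "xstar_vec f g k = (\<chi> i. xstar f g k)"

definition phi :: "real^'n^'n \<Rightarrow> real \<Rightarrow> (nat \<Rightarrow> 'n \<Rightarrow> real \<Rightarrow> real) \<Rightarrow> nat \<Rightarrow> real^'n \<Rightarrow> real" where
  "phi W \<alpha> f k x = (1/2) * (x \<bullet> ((mat 1 - W) *v x)) + \<alpha> * fsum f k x"

definition xtilde :: "real^'n^'n \<Rightarrow> real \<Rightarrow> (nat \<Rightarrow> 'n \<Rightarrow> real \<Rightarrow> real) \<Rightarrow> (nat \<Rightarrow> 'n \<Rightarrow> real \<Rightarrow> real) \<Rightarrow> nat \<Rightarrow> real^'n" where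
  "xtilde W \<alpha> f g k = (THE x. \<forall>y. phi W \<alpha> f k x + \<alpha> * gsum g k x \<le> phi W \<alpha> f k y + \<alpha> * gsum g k y)"

definition xbar :: "real^'n \<Rightarrow> real^'n" where
  "xbar x = avg_mat *v x"

text \<open>One inexact proximal-gradient step using the data at time index k
  (in the algorithm this is k+1), with additive error e.\<close>
definition dpgm_step :: "real^'n^'n \<Rightarrow> real \<Rightarrow> (nat \<Rightarrow> 'n \<Rightarrow> real \<Rightarrow> real) \<Rightarrow> (nat \<Rightarrow> 'n \<Rightarrow> real \<Rightarrow> real)
    \<Rightarrow> nat \<Rightarrow> real^'n \<Rightarrow> real^'n \<Rightarrow> real^'n" where
  "dpgm_step W \<alpha> f g k e x = prox (gsum g k) \<alpha> (W *v x - \<alpha> *\<^sub>R gradf f k x) + e"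

primrec dpgm_inner :: "real^'n^'n \<Rightarrow> real \<Rightarrow> (nat \<Rightarrow> 'n \<Rightarrow> real \<Rightarrow> real) \<Rightarrow> (nat \<Rightarrow> 'n \<Rightarrow> real \<Rightarrow> real)
    \<Rightarrow> nat \<Rightarrow> (nat \<Rightarrow> real^'n) \<Rightarrow> real^'n \<Rightarrow> nat \<Rightarrow> real^'n" where
  "dpgm_inner W \<alpha> f g k es x0 0 = x0"
| "dpgm_inner W \<alpha> f g k es x0 (Suc l) = dpgm_step W \<alpha> f g k (es l) (dpgm_inner W \<alpha> f g k es x0 l)"

definition dvec :: "real^'n^'n \<Rightarrow> real \<Rightarrow> (nat \<Rightarrow> 'n \<Rightarrow> real \<Rightarrow> real) \<Rightarrow> (nat \<Rightarrow> 'n \<Rightarrow> real \<Rightarrow> real)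
    \<Rightarrow> nat \<Rightarrow> real^'n \<Rightarrow> real^3" where
  "dvec W \<alpha> f g k x = vector [norm (xbar x - xstar_vec f g k), norm (x - xbar x), norm (x - xtilde W \<alpha> f g k)]"

definition Amat :: "real \<Rightarrow> real \<Rightarrow> real \<Rightarrow> real \<Rightarrow> real \<Rightarrow> real^3^3" where
  "Amat \<alpha> Lf mf rho lmin = (let c = sqrt (1 - 2 * \<alpha> * mf * Lf / (mf + Lf));
       L\<phi> = 1 - lmin + \<alpha> * Lf; m\<phi> = \<alpha> * mf; \<zeta> = max \<bar>1 - L\<phi>\<bar> \<bar>1 - m\<phi>\<bar> in
     vector [vector [c, \<alpha> * Lf, 0], vector [0, rho, \<alpha> * Lf], vector [0, 0, \<zeta>]])"

definition cmat :: "real^'m^'m \<Rightarrow> complex^'m^'m" where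
  "cmat B = (\<chi> i j. complex_of_real (B $ i $ j))"

end

theory Submission
  imports Defs
begin

text \<open>
  One inner step is estimated row by row.  The network average performs a gradient step on the
  averaged cost, which is \<open>m\<^sub>f\<close>-strongly monotone and \<open>L\<^sub>f\<close>-Lipschitz, hence contracts by \<open>c\<close>;
  it is disturbed by the disagreement (through the gradients), by the displacement of the prox,
  which is at most \<open>\<alpha> L\<^sub>g\<close> because \<open>g\<close> is \<open>L\<^sub>g\<close>-Lipschitz, and by the error.  The disagreement
  contracts by \<open>\<rho>(W)\<close>, the gradients being controlled through \<open>\<parallel>x - x\<^sup>~\<parallel>\<close> and the fixed-point
  equation of \<open>x\<^sup>~\<close>.  Finally \<open>x\<^sup>~\<close> is a fixed point of the nonexpansive prox composed with
  \<open>x \<mapsto> W x - \<alpha> \<nabla>f(x)\<close>, and the difference of two values of the latter map is a symmetric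
  matrix \<open>W - \<alpha> diag(\<kappa>)\<close>, \<open>m\<^sub>f \<le> \<kappa> \<le> L\<^sub>f\<close>, applied to the difference of the arguments; its
  spectrum lies in \<open>[\<lambda>\<^sub>m\<^sub>i\<^sub>n(W) - \<alpha> L\<^sub>f, 1 - \<alpha> m\<^sub>f]\<close>, which gives the rate \<open>\<zeta>\<^sub>\<phi>\<close>.
  Iterating with the nonnegative matrix \<open>A\<close>, adding the drift of \<open>x\<^sup>*\<close> and \<open>x\<^sup>~\<close> between two
  times and integrating yields the recursion.  \<open>A\<^sup>M\<^sup>o\<close> is upper triangular with diagonal
  \<open>c\<^sup>M\<^sup>o, \<rho>(W)\<^sup>M\<^sup>o, \<zeta>\<^sub>\<phi>\<^sup>M\<^sup>o\<close>, all in \<open>[0, 1)\<close> under the step-size condition.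
\<close>

section \<open>Vectors and the averaging matrix\<close>

lemma norm_vec_power2: "(norm (x::real^'n))\<^sup>2 = (\<Sum>i\<in>UNIV. (x$i)\<^sup>2)"
  unfolding power2_norm_eq_inner inner_vec_def by (simp add: power2_eq_square)

lemma norm_const_vec: "norm ((\<chi> i. c)::real^'n) = sqrt (real CARD('n)) * \<bar>c\<bar>"
proof -
  have "(norm ((\<chi> i. c)::real^'n))\<^sup>2 = real CARD('n) * c\<^sup>2"
    by (simp add: norm_vec_power2)
  then have "norm ((\<chi> i. c)::real^'n) = sqrt (real CARD('n) * c\<^sup>2)"
    by (metis norm_ge_zero real_sqrt_unique)
  then show ?thesis by (simp add: real_sqrt_mult)
qed

lemma norm_add_scaleR_power2:
  "(norm (a + t *\<^sub>R b))\<^sup>2 = (norm a)\<^sup>2 + 2 * t * (a \<bullet> b) + t\<^sup>2 * (norm b)\<^sup>2"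
  for a b :: "'a::real_inner"
  unfolding power2_norm_eq_inner
  by (simp add: inner_add_left inner_add_right inner_commute power2_eq_square algebra_simps)

lemma norm_midpoint_diff_power2:
  "(norm ((1/2) *\<^sub>R (a + b) - y))\<^sup>2
     = ((norm (a - y))\<^sup>2 + (norm (b - y))\<^sup>2) / 2 - (norm (a - b))\<^sup>2 / 4"
  for a b y :: "'a::real_inner"
proof -
  have "(1/2) *\<^sub>R (a + b) - y = (1/2) *\<^sub>R ((a - y) + (b - y))"
    by (simp add: algebra_simps flip: scaleR_add_left)
  then show ?thesis
    by (simp add: power2_norm_eq_inner inner_add_left inner_add_right inner_diff_left
        inner_diff_right inner_commute field_simps)
qed

lemma norm_diff_diff_add_add_le:
  "norm (a - b - c + d + e) \<le> norm a + norm b + norm c + norm d + norm (e::'a::real_normed_vector)"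
  by (rule order_trans[OF norm_triangle_ineq add_right_mono], rule order_trans[OF norm_triangle_ineq
      add_right_mono], rule order_trans[OF norm_triangle_ineq4 add_right_mono],
      rule norm_triangle_ineq4)

lemma norm_diff_add_add_le:
  "norm (a - b + d + e) \<le> norm a + norm b + norm d + norm (e::'a::real_normed_vector)"
  using norm_diff_diff_add_add_le[of a b 0 d e] by simp

lemma matrix_vector_mult_nth: "(B *v v) $ i = (\<Sum>j\<in>UNIV. B$i$j * v$j)"
  by (simp add: matrix_vector_mult_def)

lemma matrix_vector_mult_mono:
  fixes B :: "real^'m^'m"
  assumes "\<And>i j. 0 \<le> B$i$j" and "\<And>j. u$j \<le> v$j"
  shows "(B *v u)$i \<le> (B *v v)$i"
  unfolding matrix_vector_mult_nth by (intro sum_mono mult_left_mono assms)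

lemma matrix_vector_mult_sum: "B *v (\<Sum>l\<in>S. v l) = (\<Sum>l\<in>S. B *v v l)"
  for B :: "real^'m^'m"
  by (induct S rule: infinite_finite_induct) (auto simp: matrix_vector_right_distrib)

lemma mpow_nonneg:
  fixes B :: "real^'m^'m"
  assumes "\<And>i j. 0 \<le> B$i$j"
  shows "0 \<le> mpow B n $ i $ j"
proof (induction n arbitrary: i j)
  case 0
  then show ?case by (simp add: mat_def)
next
  case (Suc n)
  then show ?case by (simp add: matrix_matrix_mult_def assms sum_nonneg)
qed

lemma avg_mat_mult_vec: "avg_mat *v (x::real^'n) = (\<chi> i. (\<Sum>j\<in>UNIV. x$j) / real CARD('n))"
  by (simp add: avg_mat_def matrix_vector_mult_def vec_eq_iff sum_divide_distrib)

lemma avg_mat_idem: "avg_mat *v (avg_mat *v (x::real^'n)) = avg_mat *v x"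
  by (simp add: avg_mat_mult_vec vec_eq_iff)

lemma norm_avg_mat_pythagoras:
  "(norm (x::real^'n))\<^sup>2 = (norm (avg_mat *v x))\<^sup>2 + (norm (x - avg_mat *v x))\<^sup>2"
proof -
  let ?a = "(\<Sum>j\<in>UNIV. x$j) / real CARD('n)"
  have "(x - avg_mat *v x) \<bullet> (avg_mat *v x) = (\<Sum>i\<in>UNIV. (x$i - ?a) * ?a)"
    by (simp add: avg_mat_mult_vec inner_vec_def)
  also have "\<dots> = (\<Sum>i\<in>UNIV. x$i - ?a) * ?a"
    by (simp only: sum_distrib_right)
  also have "(\<Sum>i\<in>UNIV. x$i - ?a) = 0"
    by (simp add: sum_subtractf)
  finally have orth: "(x - avg_mat *v x) \<bullet> (avg_mat *v x) = 0"
    by simp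
  have "(norm x)\<^sup>2 = (norm (avg_mat *v x + (x - avg_mat *v x)))\<^sup>2"
    by simp
  also have "\<dots> = (norm (avg_mat *v x))\<^sup>2 + (norm (x - avg_mat *v x))\<^sup>2"
    using orth dot_norm[of "x - avg_mat *v x" "avg_mat *v x"] by (simp add: add.commute)
  finally show ?thesis .
qed

lemma norm_avg_mat_le: "norm (avg_mat *v (x::real^'n)) \<le> norm x"
  using norm_avg_mat_pythagoras[of x]
  by (metis le_add_same_cancel1 norm_ge_zero power2_le_imp_le zero_le_power2)

lemma norm_avg_mat_residual_le: "norm (x - avg_mat *v (x::real^'n)) \<le> norm x"
  using norm_avg_mat_pythagoras[of x]
  by (metis le_add_same_cancel2 norm_ge_zero power2_le_imp_le zero_le_power2)

lemma avg_mat_mult_column_stochastic: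
  assumes "\<And>j. (\<Sum>i\<in>UNIV. W $ i $ j) = 1"
  shows "avg_mat *v (W *v (x::real^'n)) = avg_mat *v x"
proof -
  have "(\<Sum>j\<in>UNIV. (W *v x)$j) = (\<Sum>i\<in>UNIV. x$i)"
    by (simp add: matrix_vector_mult_def sum.swap[of _ UNIV UNIV]
        sum_distrib_right[symmetric] assms)
  then show ?thesis by (simp add: avg_mat_mult_vec)
qed

lemma row_stochastic_mult_avg_mat:
  assumes "\<And>i. (\<Sum>j\<in>UNIV. W $ i $ j) = 1"
  shows "W *v (avg_mat *v (x::real^'n)) = avg_mat *v x"
  unfolding avg_mat_mult_vec
  by (simp add: matrix_vector_mult_def vec_eq_iff sum_distrib_right[symmetric] assms
      del: times_divide_eq_right)

section \<open>Strongly convex and smooth functions of one variable\<close>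

lemma strongly_convex_above_tangent:
  fixes \<phi> :: "real \<Rightarrow> real"
  assumes diff: "\<And>y. \<phi> differentiable (at y)"
    and strong: "convex_on UNIV (\<lambda>y. \<phi> y - m/2 * y\<^sup>2)"
  shows "\<phi> x + deriv \<phi> x * (y - x) + m/2 * (y - x)\<^sup>2 \<le> \<phi> y"
proof -
  have "(\<phi> has_real_derivative deriv \<phi> x) (at x)"
    using diff DERIV_deriv_iff_real_differentiable by blast
  then have "((\<lambda>y. \<phi> y - m/2 * y\<^sup>2) has_field_derivative (deriv \<phi> x - m * x)) (at x within UNIV)"
    by (auto intro!: derivative_eq_intros)
  from convex_on_imp_above_tangent[OF strong _ _ _ this]
  have "(deriv \<phi> x - m * x) * (y - x) \<le> \<phi> y - m/2 * y\<^sup>2 - (\<phi> x - m/2 * x\<^sup>2)"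
    by auto
  moreover have "m/2 * y\<^sup>2 - m/2 * x\<^sup>2 + (deriv \<phi> x - m * x) * (y - x)
      = deriv \<phi> x * (y - x) + m/2 * (y - x)\<^sup>2"
    by (simp add: power2_eq_square algebra_simps)
  ultimately show ?thesis by linarith
qed

lemma strongly_convex_deriv_monotone:
  fixes \<phi> :: "real \<Rightarrow> real"
  assumes "\<And>y. \<phi> differentiable (at y)" and "convex_on UNIV (\<lambda>y. \<phi> y - m/2 * y\<^sup>2)"
  shows "m * (x - y)\<^sup>2 \<le> (deriv \<phi> x - deriv \<phi> y) * (x - y)"
  using strongly_convex_above_tangent[OF assms, of x y] strongly_convex_above_tangent[OF assms, of y x]
  by (simp add: power2_eq_square algebra_simps)

lemma strongly_convex_le_smooth:
  fixes \<phi> :: "real \<Rightarrow> real"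
  assumes "\<And>y. \<phi> differentiable (at y)" and "convex_on UNIV (\<lambda>y. \<phi> y - m/2 * y\<^sup>2)"
    and "\<And>y z. \<bar>deriv \<phi> y - deriv \<phi> z\<bar> \<le> L * \<bar>y - z\<bar>"
  shows "m \<le> L"
  using strongly_convex_deriv_monotone[OF assms(1,2), of 1 0] assms(3)[of 1 0] by simp

lemma smooth_convex_upper_bound:
  fixes \<phi> :: "real \<Rightarrow> real"
  assumes diff: "\<And>y. \<phi> differentiable (at y)"
    and strong: "convex_on UNIV (\<lambda>y. \<phi> y - m/2 * y\<^sup>2)" and "0 \<le> m"
    and smooth: "\<And>y z. \<bar>deriv \<phi> y - deriv \<phi> z\<bar> \<le> L * \<bar>y - z\<bar>"
  shows "\<phi> (x + t) - \<phi> x \<le> deriv \<phi> x * t + L * t\<^sup>2"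
proof -
  have "\<phi> (x + t) - deriv \<phi> (x + t) * t + m * t\<^sup>2 / 2 \<le> \<phi> x"
    using strongly_convex_above_tangent[OF diff strong, of "x + t" x] by simp
  moreover have "0 \<le> m * t\<^sup>2 / 2"
    using \<open>0 \<le> m\<close> by simp
  moreover have "(deriv \<phi> (x + t) - deriv \<phi> x) * t \<le> \<bar>deriv \<phi> (x + t) - deriv \<phi> x\<bar> * \<bar>t\<bar>"
    by (metis abs_ge_self abs_mult)
  moreover have "\<bar>deriv \<phi> (x + t) - deriv \<phi> x\<bar> * \<bar>t\<bar> \<le> L * t\<^sup>2"
    using mult_right_mono[OF smooth[of "x + t" x] abs_ge_zero[of t]]
    by (simp add: power2_eq_square abs_mult_self_eq mult.assoc)
  ultimately show ?thesis by (simp add: algebra_simps)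
qed

lemma strongly_convex_midpoint:
  fixes \<phi> :: "real \<Rightarrow> real"
  assumes "convex_on UNIV (\<lambda>y. \<phi> y - m/2 * y\<^sup>2)"
  shows "\<phi> ((a + b)/2) \<le> (\<phi> a + \<phi> b)/2 - m/8 * (a - b)\<^sup>2"
proof -
  have "(\<lambda>y. \<phi> y - m/2 * y\<^sup>2) ((1 - 1/2) *\<^sub>R a + (1/2) *\<^sub>R b)
      \<le> (1 - 1/2) * (\<lambda>y. \<phi> y - m/2 * y\<^sup>2) a + (1/2) * (\<lambda>y. \<phi> y - m/2 * y\<^sup>2) b"
    by (rule convex_onD[OF assms]) auto
  then show ?thesis by (simp add: power2_eq_square field_simps)
qed

lemma convex_on_midpoint:
  fixes G :: "'a::real_vector \<Rightarrow> real"
  assumes "convex_on UNIV G"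
  shows "G ((1/2) *\<^sub>R (a + b)) \<le> (G a + G b)/2"
proof -
  have "G ((1 - 1/2) *\<^sub>R a + (1/2) *\<^sub>R b) \<le> (1 - 1/2) * G a + (1/2) * G b"
    by (rule convex_onD[OF assms]) auto
  then show ?thesis by (simp add: scaleR_add_right)
qed

lemma gradient_step_contraction:
  fixes m L \<alpha> \<delta> u :: real
  assumes m: "0 < m" "m \<le> L" and \<alpha>: "0 < \<alpha>" "\<alpha> \<le> 2 / (m + L)"
    and mono: "m * \<delta>\<^sup>2 \<le> u * \<delta>" and lip: "\<bar>u\<bar> \<le> L * \<bar>\<delta>\<bar>"
  shows "\<bar>\<delta> - \<alpha> * u\<bar> \<le> sqrt (1 - 2 * \<alpha> * m * L / (m + L)) * \<bar>\<delta>\<bar>"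
proof -
  have mL: "0 < m + L" using m by simp
  \<comment> \<open>\<open>u\<close> lies between \<open>m \<delta>\<close> and \<open>L \<delta>\<close> (co-coercivity in one dimension)\<close>
  have between: "0 \<le> (u - m * \<delta>) * (L * \<delta> - u)"
  proof (cases "0 \<le> \<delta>")
    case True
    then have "u \<le> L * \<delta>" using lip by (simp add: abs_le_iff)
    moreover have "m * \<delta> \<le> u" if "0 < \<delta>"
      using mono that by (simp add: power2_eq_square mult_le_cancel_right)
    ultimately show ?thesis using True lip
      by (cases "\<delta> = 0") (auto intro!: mult_nonneg_nonneg)
  next
    case False
    then have "L * \<delta> \<le> u" using lip by (simp add: abs_le_iff)
    moreover have "u \<le> m * \<delta>"
      using mono False by (simp add: power2_eq_square mult_le_cancel_right)
    ultimately show ?thesis by (simp add: mult_nonpos_nonpos)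
  qed
  have "\<alpha> * u\<^sup>2 \<le> (2 / (m + L)) * ((m + L) * u * \<delta> - m * L * \<delta>\<^sup>2)"
  proof (rule mult_mono)
    show "u\<^sup>2 \<le> (m + L) * u * \<delta> - m * L * \<delta>\<^sup>2"
      using between by (simp add: power2_eq_square algebra_simps)
  qed (use \<alpha> mL in auto)
  also have "\<dots> = 2 * u * \<delta> - 2 * m * L * \<delta>\<^sup>2 / (m + L)"
    using mL by (simp add: field_simps)
  finally have "\<alpha> * (\<alpha> * u\<^sup>2) \<le> \<alpha> * (2 * u * \<delta> - 2 * m * L * \<delta>\<^sup>2 / (m + L))"
    using \<alpha> by (simp add: mult_left_mono)
  moreover have "(\<delta> - \<alpha> * u)\<^sup>2 = \<delta>\<^sup>2 - 2 * \<alpha> * u * \<delta> + \<alpha> * (\<alpha> * u\<^sup>2)"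
    by (simp add: power2_eq_square algebra_simps)
  moreover have "(1 - 2 * \<alpha> * m * L / (m + L)) * \<delta>\<^sup>2 = \<delta>\<^sup>2 - \<alpha> * (2 * m * L * \<delta>\<^sup>2 / (m + L))"
    using mL by (simp add: field_simps)
  ultimately have "(\<delta> - \<alpha> * u)\<^sup>2 \<le> (1 - 2 * \<alpha> * m * L / (m + L)) * \<delta>\<^sup>2"
    by (simp add: right_diff_distrib)
  then have "sqrt ((\<delta> - \<alpha> * u)\<^sup>2) \<le> sqrt ((1 - 2 * \<alpha> * m * L / (m + L)) * \<delta>\<^sup>2)"
    by (rule real_sqrt_le_mono)
  then show ?thesis by (simp add: real_sqrt_mult)
qed

section \<open>Minimizers\<close>

lemma minimizer_variational_inequality:
  fixes G Q :: "'a::real_vector \<Rightarrow> real"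
  assumes min: "\<And>z. G p + Q p \<le> G z + Q z" and cvx: "convex_on UNIV G"
    and Q_upper: "\<And>t. 0 < t \<Longrightarrow> t \<le> 1 \<Longrightarrow> Q (p + t *\<^sub>R d) - Q p \<le> t * D + t\<^sup>2 * C"
  shows "0 \<le> G (p + d) - G p + D"
proof (rule ccontr)
  define X where "X = G (p + d) - G p + D"
  assume "\<not> 0 \<le> G (p + d) - G p + D"
  then have X: "X < 0" by (simp add: X_def)
  have small_step: "0 \<le> X + t * C" if t: "0 < t" "t \<le> 1" for t
  proof -
    have "G ((1 - t) *\<^sub>R p + t *\<^sub>R (p + d)) \<le> (1 - t) * G p + t * G (p + d)"
      by (rule convex_onD[OF cvx]) (use t in auto)
    moreover have "(1 - t) *\<^sub>R p + t *\<^sub>R (p + d) = p + t *\<^sub>R d"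
      by (simp add: algebra_simps)
    ultimately have "G (p + t *\<^sub>R d) \<le> G p + t * (G (p + d) - G p)"
      by (simp add: algebra_simps)
    with min[of "p + t *\<^sub>R d"] Q_upper[OF t] have "0 \<le> t * (X + t * C)"
      by (simp add: X_def algebra_simps power2_eq_square)
    then show ?thesis using t by (simp add: zero_le_mult_iff)
  qed
  define t where "t = min 1 (- X / (2 * (\<bar>C\<bar> + 1)))"
  have "0 < - X / (2 * (\<bar>C\<bar> + 1))"
    using X by (intro divide_pos_pos) auto
  then have t: "0 < t" "t \<le> 1"
    by (auto simp: t_def)
  have "t * C \<le> (- X / (2 * (\<bar>C\<bar> + 1))) * \<bar>C\<bar>"
    by (rule order_trans[OF mult_left_mono[OF abs_ge_self] mult_right_mono])
      (use t in \<open>auto simp: t_def\<close>)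
  also have "\<dots> = (- X / 2) * (\<bar>C\<bar> / (\<bar>C\<bar> + 1))"
    by (simp add: field_simps)
  also have "\<dots> \<le> - X / 2"
    using X by (intro mult_left_le) auto
  finally show False
    using small_step[OF t] X by linarith
qed

lemma continuous_coercive_has_minimizer:
  fixes \<Psi> :: "'a::euclidean_space \<Rightarrow> real"
  assumes cont: "continuous_on UNIV \<Psi>"
    and coercive: "\<And>x. a * (norm x)\<^sup>2 - b * norm x + c \<le> \<Psi> x" and "0 < a"
  shows "\<exists>p. \<forall>z. \<Psi> p \<le> \<Psi> z"
proof -
  define R where "R = (\<bar>b\<bar> + \<bar>\<Psi> 0 - c\<bar> + 1) / a + 1"
  have R: "1 \<le> R" using \<open>0 < a\<close> by (simp add: R_def)
  have outside: "\<Psi> 0 \<le> \<Psi> x" if "R < norm x" for x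
  proof -
    have "a * R < a * norm x" using mult_strict_left_mono[OF that \<open>0 < a\<close>] .
    moreover have "a * R = \<bar>b\<bar> + \<bar>\<Psi> 0 - c\<bar> + 1 + a"
      using \<open>0 < a\<close> by (simp add: R_def field_simps)
    ultimately have "\<bar>\<Psi> 0 - c\<bar> + 1 \<le> a * norm x - b"
      using \<open>0 < a\<close> by linarith
    then have "norm x * (\<bar>\<Psi> 0 - c\<bar> + 1) \<le> norm x * (a * norm x - b)"
      by (simp add: mult_left_mono)
    moreover have "1 * (\<bar>\<Psi> 0 - c\<bar> + 1) \<le> norm x * (\<bar>\<Psi> 0 - c\<bar> + 1)"
      using that R by (intro mult_right_mono) auto
    ultimately have "\<bar>\<Psi> 0 - c\<bar> + 1 \<le> a * (norm x)\<^sup>2 - b * norm x"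
      by (simp add: power2_eq_square algebra_simps)
    with coercive[of x] show ?thesis by linarith
  qed
  have "continuous_on (cball 0 R) \<Psi>"
    using cont continuous_on_subset by blast
  then obtain p where p: "p \<in> cball 0 R" "\<And>y. y \<in> cball 0 R \<Longrightarrow> \<Psi> p \<le> \<Psi> y"
    using continuous_attains_inf[of "cball 0 R" \<Psi>] R by fastforce
  have "\<Psi> p \<le> \<Psi> z" for z
  proof (cases "norm z \<le> R")
    case False
    then have "\<Psi> 0 \<le> \<Psi> z" using outside by simp
    moreover have "\<Psi> p \<le> \<Psi> 0" using p(2)[of 0] R by simp
    ultimately show ?thesis by simp
  qed (use p in simp)
  then show ?thesis by blast
qed

lemma unique_minimizer:
  fixes \<Psi> :: "'a::euclidean_space \<Rightarrow> real"
  assumes "continuous_on UNIV \<Psi>"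
    and "\<And>x. a * (norm x)\<^sup>2 - b * norm x + c \<le> \<Psi> x" and "0 < a"
    and midpoint: "\<And>p q. \<Psi> ((1/2) *\<^sub>R (p + q)) \<le> (\<Psi> p + \<Psi> q)/2 - \<mu> * (norm (p - q))\<^sup>2"
    and "0 < \<mu>"
  shows "\<exists>!p. \<forall>z. \<Psi> p \<le> \<Psi> z"
proof (rule ex_ex1I)
  show "\<exists>p. \<forall>z. \<Psi> p \<le> \<Psi> z"
    by (rule continuous_coercive_has_minimizer) fact+
next
  fix p q
  assume "\<forall>z. \<Psi> p \<le> \<Psi> z" "\<forall>z. \<Psi> q \<le> \<Psi> z"
  then have "\<Psi> p \<le> \<Psi> ((1/2) *\<^sub>R (p + q))" "\<Psi> q = \<Psi> p"
    by (auto intro: antisym)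
  with midpoint[of p q] have "\<mu> * (norm (p - q))\<^sup>2 \<le> 0"
    by (simp add: field_simps)
  with \<open>0 < \<mu>\<close> show "p = q"
    by (simp add: mult_le_0_iff)
qed

section \<open>Symmetric matrices\<close>

lemma symmetric_matrix_inner_commute:
  fixes B :: "real^'n^'n"
  assumes "transpose B = B"
  shows "u \<bullet> (B *v v) = (B *v u) \<bullet> v"
  by (metis dot_lmul_matrix inner_commute assms transpose_matrix_vector)

lemma norm_symmetric_matrix_le:
  fixes B :: "real^'n^'n"
  assumes sym: "transpose B = B" and quad: "\<And>w. \<bar>w \<bullet> (B *v w)\<bar> \<le> z * (norm w)\<^sup>2"
  shows "norm (B *v w) \<le> z * norm w"
proof (cases "B *v w = 0")
  case True
  have "0 \<le> z * (norm w)\<^sup>2" using quad[of w] by linarith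
  then show ?thesis using True by (cases "w = 0") (auto simp: zero_le_mult_iff)
next
  case False
  \<comment> \<open>polarization with the vector \<open>u\<close> of norm \<open>\<parallel>w\<parallel>\<close> pointing along \<open>B w\<close>\<close>
  define u where "u = (norm w / norm (B *v w)) *\<^sub>R (B *v w)"
  have norm_u: "norm u = norm w" using False by (simp add: u_def)
  have "4 * (u \<bullet> (B *v w)) = (u + w) \<bullet> (B *v (u + w)) - (u - w) \<bullet> (B *v (u - w))"
    using symmetric_matrix_inner_commute[OF sym, of u w]
      symmetric_matrix_inner_commute[OF sym, of w u]
    by (simp add: matrix_vector_right_distrib matrix_vector_mult_diff_distrib inner_add_left
        inner_add_right inner_diff_left inner_diff_right inner_commute)
  also have "\<dots> \<le> z * (norm (u + w))\<^sup>2 + z * (norm (u - w))\<^sup>2"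
    using quad[of "u + w"] quad[of "u - w"] by linarith
  also have "\<dots> = 2 * z * ((norm u)\<^sup>2 + (norm w)\<^sup>2)"
    by (simp add: power2_norm_eq_inner inner_add_left inner_add_right inner_diff_left
        inner_diff_right inner_commute algebra_simps)
  also have "u \<bullet> (B *v w) = norm w * norm (B *v w)"
    using False by (simp add: u_def power2_norm_eq_inner[symmetric] power2_eq_square)
  finally have "norm w * norm (B *v w) \<le> norm w * (z * norm w)"
    using norm_u by (simp add: power2_eq_square algebra_simps)
  moreover have "w \<noteq> 0" using False by auto
  ultimately show ?thesis by simp
qed

lemma symmetric_matrix_eigenvalues_finite:
  fixes B :: "real^'n^'n"
  assumes sym: "transpose B = B"
  shows "finite {l. \<exists>v. v \<noteq> 0 \<and> B *v v = l *s v}"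
    (is "finite ?eigs")
proof -
  define ev where "ev l = (SOME v. v \<noteq> 0 \<and> B *v v = l *s v)" for l
  have ev: "ev l \<noteq> 0 \<and> B *v ev l = l *s ev l" if "l \<in> ?eigs" for l
    using that unfolding ev_def by (metis (mono_tags, lifting) mem_Collect_eq someI)
  have inj: "inj_on ev ?eigs"
  proof (rule inj_onI)
    fix a b assume ab: "a \<in> ?eigs" "b \<in> ?eigs" "ev a = ev b"
    then have "a *s ev a = b *s ev a"
      using ev[of a] ev[of b] by metis
    then have "(a - b) *\<^sub>R ev a = 0"
      by (simp add: scalar_mult_eq_scaleR algebra_simps)
    then show "a = b" using ev[OF ab(1)] by simp
  qed
  \<comment> \<open>eigenvectors of distinct eigenvalues of a symmetric matrix are orthogonal\<close>
  have "pairwise orthogonal (ev ` ?eigs)"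
  proof (rule pairwiseI)
    fix x y assume xy: "x \<in> ev ` ?eigs" "y \<in> ev ` ?eigs" "x \<noteq> y"
    then obtain a b where a: "a \<in> ?eigs" "x = ev a" and b: "b \<in> ?eigs" "y = ev b"
      by blast
    have "a \<noteq> b" using xy(3) a(2) b(2) by auto
    have "a * (x \<bullet> y) = (B *v x) \<bullet> y"
      using ev[OF a(1)] a(2) by (simp add: scalar_mult_eq_scaleR)
    also have "\<dots> = x \<bullet> (B *v y)"
      using symmetric_matrix_inner_commute[OF sym, of x y] by simp
    also have "\<dots> = b * (x \<bullet> y)"
      using ev[OF b(1)] b(2) by (simp add: scalar_mult_eq_scaleR)
    finally show "orthogonal x y"
      using \<open>a \<noteq> b\<close> by (simp add: orthogonal_def algebra_simps)
  qed
  moreover have "0 \<notin> ev ` ?eigs" by (metis (lifting) ev imageE)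
  ultimately have "finite (ev ` ?eigs)"
    using pairwise_orthogonal_independent finiteI_independent by blast
  then show ?thesis using inj finite_imageD by blast
qed

lemma symmetric_matrix_min_rayleigh_eigenvalue:
  fixes B :: "real^'n^'n"
  assumes sym: "transpose B = B"
  obtains \<mu> where "\<mu> \<in> {l. \<exists>v. v \<noteq> 0 \<and> B *v v = l *s v}"
    and "\<And>v. \<mu> * (norm v)\<^sup>2 \<le> v \<bullet> (B *v v)"
proof -
  let ?q = "\<lambda>v::real^'n. v \<bullet> (B *v v)"
  have "continuous_on (sphere 0 1) ?q"
    by (intro continuous_intros linear_continuous_on matrix_vector_mul_bounded_linear)
  then obtain u where u: "u \<in> sphere 0 1" "\<And>v. v \<in> sphere 0 1 \<Longrightarrow> ?q u \<le> ?q v"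
    using continuous_attains_inf[of "sphere 0 1" ?q] by fastforce
  define \<mu> where "\<mu> = ?q u"
  have norm_u: "norm u = 1" using u(1) by simp
  have rayleigh: "\<mu> * (norm v)\<^sup>2 \<le> ?q v" for v
  proof (cases "v = 0")
    case False
    then have "(1 / norm v) *\<^sub>R v \<in> sphere 0 1" by simp
    then have "\<mu> \<le> ?q ((1 / norm v) *\<^sub>R v)"
      unfolding \<mu>_def by (rule u(2))
    also have "?q ((1 / norm v) *\<^sub>R v) = ?q v / (norm v)\<^sup>2"
      by (simp add: matrix_vector_mult_scaleR power2_eq_square)
    finally show ?thesis
      using False by (simp add: field_simps)
  qed simp
  \<comment> \<open>\<open>u\<close> minimizes \<open>q v - \<mu> \<parallel>v\<parallel>\<^sup>2\<close>, so the gradient \<open>2 (B u - \<mu> u)\<close> vanishes there\<close>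
  define r where "r = B *v u - \<mu> *\<^sub>R u"
  define d where "d = - r"
  have "0 \<le> (\<lambda>_. 0::real) (u + d) - (\<lambda>_. 0::real) u + 2 * (d \<bullet> r)"
  proof (rule minimizer_variational_inequality
      [where Q = "\<lambda>v. ?q v - \<mu> * (norm v)\<^sup>2" and C = "?q d - \<mu> * (norm d)\<^sup>2"])
    show "0 + (?q u - \<mu> * (norm u)\<^sup>2) \<le> 0 + (?q z - \<mu> * (norm z)\<^sup>2)" for z
      using rayleigh[of z] norm_u by (simp add: \<mu>_def)
    fix t :: real
    have "u \<bullet> (B *v d) = d \<bullet> (B *v u)"
      using symmetric_matrix_inner_commute[OF sym, of u d] by (simp add: inner_commute)
    then have q_expand: "?q (u + t *\<^sub>R d) = ?q u + 2 * t * (d \<bullet> (B *v u)) + t\<^sup>2 * ?q d"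
      by (simp add: matrix_vector_right_distrib matrix_vector_mult_scaleR inner_add_left
          inner_add_right power2_eq_square algebra_simps)
    have r_expand: "d \<bullet> r = d \<bullet> (B *v u) - \<mu> * (u \<bullet> d)"
      by (simp add: r_def inner_diff_right inner_commute)
    show "(?q (u + t *\<^sub>R d) - \<mu> * (norm (u + t *\<^sub>R d))\<^sup>2) - (?q u - \<mu> * (norm u)\<^sup>2)
        \<le> t * (2 * (d \<bullet> r)) + t\<^sup>2 * (?q d - \<mu> * (norm d)\<^sup>2)"
      unfolding norm_add_scaleR_power2 q_expand r_expand by (simp add: algebra_simps)
  qed (simp add: convex_on_const)
  then have "r \<bullet> r \<le> 0" by (simp add: d_def)
  then have "r = 0" by (metis inner_eq_zero_iff inner_ge_zero order_antisym)
  then have "\<mu> \<in> {l. \<exists>v. v \<noteq> 0 \<and> B *v v = l *s v}"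
    using norm_u by (auto simp: r_def scalar_mult_eq_scaleR intro!: exI[of _ u])
  then show ?thesis using rayleigh by (rule that)
qed

lemma lambda_min_le_quadratic_form:
  fixes B :: "real^'n^'n"
  assumes sym: "transpose B = B"
  shows "lambda_min B * (norm x)\<^sup>2 \<le> x \<bullet> (B *v x)"
proof -
  obtain \<mu> where eig: "\<mu> \<in> {l. \<exists>v. v \<noteq> 0 \<and> B *v v = l *s v}"
    and rayleigh: "\<And>v. \<mu> * (norm v)\<^sup>2 \<le> v \<bullet> (B *v v)"
    using symmetric_matrix_min_rayleigh_eigenvalue[OF sym] by blast
  have "lambda_min B \<le> \<mu>"
    unfolding lambda_min_def by (rule Min_le[OF symmetric_matrix_eigenvalues_finite[OF sym] eig])
  then have "lambda_min B * (norm x)\<^sup>2 \<le> \<mu> * (norm x)\<^sup>2"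
    by (simp add: mult_right_mono)
  with rayleigh[of x] show ?thesis by linarith
qed

lemma doubly_stochastic_quadratic_form_le:
  fixes B :: "real^'n^'n"
  assumes nonneg: "\<And>i j. 0 \<le> B $ i $ j"
    and rows: "\<And>i. (\<Sum>j\<in>UNIV. B $ i $ j) = 1" and cols: "\<And>j. (\<Sum>i\<in>UNIV. B $ i $ j) = 1"
  shows "x \<bullet> (B *v x) \<le> (norm x)\<^sup>2"
proof -
  have "x \<bullet> (B *v x) = (\<Sum>i\<in>UNIV. \<Sum>j\<in>UNIV. B$i$j * (x$i * x$j))"
    by (simp add: inner_vec_def matrix_vector_mult_def sum_distrib_left algebra_simps)
  also have "\<dots> \<le> (\<Sum>i\<in>UNIV. \<Sum>j\<in>UNIV. B$i$j * (((x$i)\<^sup>2 + (x$j)\<^sup>2) / 2))"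
  proof (intro sum_mono mult_left_mono nonneg)
    fix i j
    show "x$i * x$j \<le> ((x$i)\<^sup>2 + (x$j)\<^sup>2) / 2"
      using zero_le_power2[of "x$i - x$j"] by (simp add: power2_eq_square algebra_simps)
  qed
  also have "\<dots> = (\<Sum>i\<in>UNIV. \<Sum>j\<in>UNIV. B$i$j * (x$i)\<^sup>2) / 2 + (\<Sum>i\<in>UNIV. \<Sum>j\<in>UNIV. B$i$j * (x$j)\<^sup>2) / 2"
    by (simp add: add_divide_distrib distrib_left sum.distrib sum_divide_distrib)
  also have "(\<Sum>i\<in>UNIV. \<Sum>j\<in>UNIV. B$i$j * (x$i)\<^sup>2) = (\<Sum>i\<in>UNIV. (x$i)\<^sup>2)"
    by (simp add: sum_distrib_right[symmetric] rows)
  also have "(\<Sum>i\<in>UNIV. \<Sum>j\<in>UNIV. B$i$j * (x$j)\<^sup>2) = (\<Sum>j\<in>UNIV. (x$j)\<^sup>2)"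
    by (subst sum.swap) (simp add: sum_distrib_right[symmetric] cols)
  finally show ?thesis by (simp add: norm_vec_power2)
qed

section \<open>Nonnegative and triangular matrices\<close>

lemma nonneg_matrix_recursion_le:
  fixes A :: "real^'m^'m" and d c :: "nat \<Rightarrow> real^'m"
  assumes nonneg: "\<And>i j. 0 \<le> A$i$j" and step: "\<And>n j. d (Suc n) $ j \<le> (A *v d n + c n) $ j"
  shows "d n $ j \<le> (mpow A n *v d 0 + (\<Sum>l<n. mpow A (n - l - 1) *v c l)) $ j"
proof (induction n arbitrary: j)
  case 0
  then show ?case by simp
next
  case (Suc n)
  have "A *v (\<Sum>l<n. mpow A (n - l - 1) *v c l) = (\<Sum>l<n. mpow A (Suc n - l - 1) *v c l)"
    unfolding matrix_vector_mult_sum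
  proof (rule sum.cong)
    fix l assume "l \<in> {..<n}"
    then have "Suc n - l - 1 = Suc (n - l - 1)" by simp
    then show "A *v (mpow A (n - l - 1) *v c l) = mpow A (Suc n - l - 1) *v c l"
      by (simp add: matrix_vector_mul_assoc)
  qed simp
  then have eq: "A *v (mpow A n *v d 0 + (\<Sum>l<n. mpow A (n - l - 1) *v c l)) + c n
      = mpow A (Suc n) *v d 0 + (\<Sum>l<Suc n. mpow A (Suc n - l - 1) *v c l)"
    by (simp add: matrix_vector_right_distrib matrix_vector_mul_assoc)
  have "d (Suc n) $ j \<le> (A *v d n) $ j + c n $ j"
    using step[of n j] by simp
  also have "(A *v d n) $ j \<le> (A *v (mpow A n *v d 0 + (\<Sum>l<n. mpow A (n - l - 1) *v c l))) $ j"
    by (rule matrix_vector_mult_mono[OF nonneg Suc.IH])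
  finally show ?case
    by (simp only: eq[symmetric] vector_add_component)
qed

definition upper_triangular3 :: "real^3^3 \<Rightarrow> bool" where
  "upper_triangular3 B \<longleftrightarrow> B$2$1 = 0 \<and> B$3$1 = 0 \<and> B$3$2 = 0"

lemma upper_triangular3_mpow:
  assumes "upper_triangular3 B"
  shows "upper_triangular3 (mpow B n) \<and> (\<forall>i. mpow B n $ i $ i = (B $ i $ i)^n)"
proof (induction n)
  case 0
  then show ?case by (simp add: upper_triangular3_def mat_def)
next
  case (Suc n)
  then show ?case
    using assms by (simp add: upper_triangular3_def matrix_matrix_mult_def sum_3 forall_3)
qed

lemma upper_triangular3_eigenvalue:
  fixes B :: "real^3^3" and v :: "complex^3"
  assumes "upper_triangular3 B" and "v \<noteq> 0" and eigen: "cmat B *v v = \<mu> *s v"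
  shows "\<exists>i. \<mu> = complex_of_real (B $ i $ i)"
proof -
  have row: "(cmat B *v v) $ i = \<mu> * v $ i" for i
    using eigen by simp
  have r1: "of_real (B$1$1) * v$1 + of_real (B$1$2) * v$2 + of_real (B$1$3) * v$3 = \<mu> * v$1"
    using row[of 1] by (simp add: matrix_vector_mult_nth cmat_def sum_3)
  have r2: "of_real (B$2$2) * v$2 + of_real (B$2$3) * v$3 = \<mu> * v$2"
    using row[of 2] assms(1) by (simp add: matrix_vector_mult_nth cmat_def sum_3 upper_triangular3_def)
  have r3: "of_real (B$3$3) * v$3 = \<mu> * v$3"
    using row[of 3] assms(1) by (simp add: matrix_vector_mult_nth cmat_def sum_3 upper_triangular3_def)
  \<comment> \<open>back substitution: the last nonzero entry of \<open>v\<close> picks the diagonal entry\<close>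
  show ?thesis
  proof (cases "v$3 = 0")
    case False
    then show ?thesis using r3 by (intro exI[of _ 3]) simp
  next
    case v3: True
    show ?thesis
    proof (cases "v$2 = 0")
      case False
      then show ?thesis using r2 v3 by (intro exI[of _ 2]) simp
    next
      case v2: True
      have "v$1 \<noteq> 0" using \<open>v \<noteq> 0\<close> v2 v3 by (auto simp: vec_eq_iff forall_3)
      then show ?thesis using r1 v2 v3 by (intro exI[of _ 1]) simp
    qed
  qed
qed

lemma (in prob_space) expectation_le_nonneg_linear_bound:
  fixes X Y :: "'a \<Rightarrow> real^'m" and P :: "real^'m^'m" and q :: "nat \<Rightarrow> real^'m"
    and r :: "nat \<Rightarrow> 'a \<Rightarrow> real"
  assumes X: "\<And>i. integrable M (\<lambda>\<omega>. X \<omega> $ i)" and Y: "integrable M (\<lambda>\<omega>. Y \<omega> $ j)"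
    and P: "\<And>i. 0 \<le> P $ j $ i" and q: "\<And>l. 0 \<le> q l $ j"
    and r: "\<And>l. integrable M (r l)" "\<And>l. expectation (r l) \<le> \<eta>"
    and bound: "\<And>\<omega>. Y \<omega> $ j \<le> (P *v X \<omega>) $ j + c + (\<Sum>l<n. r l \<omega> * q l $ j)"
  shows "expectation (\<lambda>\<omega>. Y \<omega> $ j)
    \<le> (P *v (\<chi> i. expectation (\<lambda>\<omega>. X \<omega> $ i))) $ j + c + (\<Sum>l<n. \<eta> * q l $ j)"
proof -
  have "expectation (\<lambda>\<omega>. Y \<omega> $ j)
      \<le> expectation (\<lambda>\<omega>. (\<Sum>i\<in>UNIV. P $ j $ i * X \<omega> $ i) + c + (\<Sum>l<n. r l \<omega> * q l $ j))"
    using bound X r by (intro integral_mono Y) (auto simp: matrix_vector_mult_nth)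
  also have "\<dots> = (\<Sum>i\<in>UNIV. P $ j $ i * expectation (\<lambda>\<omega>. X \<omega> $ i)) + c
      + (\<Sum>l<n. expectation (r l) * q l $ j)"
    using X r by (simp add: prob_space)
  also have "(\<Sum>l<n. expectation (r l) * q l $ j) \<le> (\<Sum>l<n. \<eta> * q l $ j)"
    using r(2) q by (intro sum_mono) (simp add: mult_right_mono)
  finally show ?thesis
    by (simp add: matrix_vector_mult_nth)
qed

section \<open>The problem data\<close>

locale dpgm_problem =
  fixes W :: "real^'n^'n" and f g :: "nat \<Rightarrow> 'n \<Rightarrow> real \<Rightarrow> real" and Lfi mfi :: "'n \<Rightarrow> real"
    and Lg \<alpha> :: real
  assumes W_sym: "transpose W = W"
    and W_nonneg: "\<And>i j. W $ i $ j \<ge> 0"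
    and W_rows: "\<And>i. (\<Sum>j\<in>UNIV. W $ i $ j) = 1"
    and W_cols: "\<And>j. (\<Sum>i\<in>UNIV. W $ i $ j) = 1"
    and mfi_pos: "\<And>i. mfi i > 0"
    and f_diff: "\<And>k i y. f k i differentiable (at y)"
    and f_smooth: "\<And>k i y z. \<bar>deriv (f k i) y - deriv (f k i) z\<bar> \<le> Lfi i * \<bar>y - z\<bar>"
    and f_strong: "\<And>k i. convex_on UNIV (\<lambda>y. f k i y - mfi i / 2 * y\<^sup>2)"
    and g_convex: "\<And>k i. convex_on UNIV (g k i)"
    and g_lip: "\<And>i. \<exists>C. \<forall>k. C-lipschitz_on UNIV (g k i)"
    and Lg_nonneg: "Lg \<ge> 0"
    and Lg_lip: "\<And>k. Lg-lipschitz_on UNIV (gsum g k)"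
    and alpha_pos: "0 < \<alpha>"
begin

abbreviation "Lf \<equiv> Max (range Lfi)"
abbreviation "mf \<equiv> Min (range mfi)"

lemma Lfi_le_Lf: "Lfi i \<le> Lf"
  by (rule Max_ge) auto

lemma mf_le_mfi: "mf \<le> mfi i"
  by (rule Min_le) auto

lemma mf_pos: "0 < mf"
  using Min_in[of "range mfi"] mfi_pos by auto

lemma mf_le_Lf: "mf \<le> Lf"
  using mf_le_mfi[of undefined] Lfi_le_Lf[of undefined]
    strongly_convex_le_smooth[OF f_diff[of 0 undefined] f_strong f_smooth]
  by linarith

lemma Lf_pos: "0 < Lf"
  using mf_pos mf_le_Lf by linarith

lemma deriv_f_lipschitz: "\<bar>deriv (f k i) a - deriv (f k i) b\<bar> \<le> Lf * \<bar>a - b\<bar>"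
  by (rule order_trans[OF f_smooth mult_right_mono[OF Lfi_le_Lf abs_ge_zero]])

lemma deriv_f_monotone: "mf * (a - b)\<^sup>2 \<le> (deriv (f k i) a - deriv (f k i) b) * (a - b)"
  using strongly_convex_deriv_monotone[OF f_diff[of k i] f_strong, of a b]
    mult_right_mono[OF mf_le_mfi[of i] zero_le_power2[of "a - b"]]
  by linarith

lemma norm_gradf_diff_le: "norm (gradf f k x - gradf f k y) \<le> Lf * norm (x - y)"
proof -
  have "(norm (gradf f k x - gradf f k y))\<^sup>2
      = (\<Sum>i\<in>UNIV. (deriv (f k i) (x$i) - deriv (f k i) (y$i))\<^sup>2)"
    by (simp add: norm_vec_power2 gradf_def)
  also have "\<dots> \<le> (\<Sum>i\<in>UNIV. (Lf * (x$i - y$i))\<^sup>2)"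
  proof (rule sum_mono)
    fix i
    have "\<bar>deriv (f k i) (x$i) - deriv (f k i) (y$i)\<bar> \<le> \<bar>Lf * (x$i - y$i)\<bar>"
      using deriv_f_lipschitz[of k i "x$i" "y$i"] Lf_pos by (simp add: abs_mult)
    then show "(deriv (f k i) (x$i) - deriv (f k i) (y$i))\<^sup>2 \<le> (Lf * (x$i - y$i))\<^sup>2"
      by (simp add: abs_le_square_iff)
  qed
  also have "\<dots> = (Lf * norm (x - y))\<^sup>2"
    by (simp add: norm_vec_power2 power_mult_distrib sum_distrib_left[symmetric])
  finally show ?thesis
    by (rule power2_le_imp_le) (use Lf_pos in simp)
qed

lemma gsum_convex: "convex_on UNIV (gsum g k)"
proof (rule convex_onI)
  fix t :: real and x y :: "real^'n"
  assume t: "0 < t" "t < 1"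
  have "gsum g k ((1 - t) *\<^sub>R x + t *\<^sub>R y) = (\<Sum>i\<in>UNIV. g k i ((1 - t) *\<^sub>R (x$i) + t *\<^sub>R (y$i)))"
    by (simp add: gsum_def)
  also have "\<dots> \<le> (\<Sum>i\<in>UNIV. (1 - t) * g k i (x$i) + t * g k i (y$i))"
    by (rule sum_mono, rule convex_onD[OF g_convex]) (use t in auto)
  also have "\<dots> = (1 - t) * gsum g k x + t * gsum g k y"
    by (simp add: gsum_def sum.distrib sum_distrib_left)
  finally show "gsum g k ((1 - t) *\<^sub>R x + t *\<^sub>R y) \<le> (1 - t) * gsum g k x + t * gsum g k y" .
qed simp

lemma gsum_lipschitz: "\<bar>gsum g k x - gsum g k y\<bar> \<le> Lg * norm (x - y)"
  using lipschitz_on_normD[OF Lg_lip[of k]] by simp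

lemma continuous_on_gsum: "continuous_on UNIV (gsum g k)"
  by (rule lipschitz_on_continuous_on[OF Lg_lip])

lemma continuous_on_fsum: "continuous_on UNIV (fsum f k)"
proof -
  have "continuous_on UNIV (f k i)" for i
    by (metis f_diff differentiable_imp_continuous_within continuous_at_imp_continuous_on)
  then show ?thesis
    unfolding fsum_def
    by (intro continuous_on_sum continuous_on_compose2[OF \<open>continuous_on UNIV (f k _)\<close>]
        continuous_intros) auto
qed

lemma fsum_lower_bound: "fsum f k 0 + gradf f k 0 \<bullet> x + mf/2 * (norm x)\<^sup>2 \<le> fsum f k x"
proof -
  have "(\<Sum>i\<in>UNIV. f k i 0 + deriv (f k i) 0 * x$i + mf/2 * (x$i)\<^sup>2) \<le> (\<Sum>i\<in>UNIV. f k i (x$i))"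
  proof (rule sum_mono)
    fix i
    show "f k i 0 + deriv (f k i) 0 * x$i + mf/2 * (x$i)\<^sup>2 \<le> f k i (x$i)"
      using strongly_convex_above_tangent[OF f_diff f_strong, of k i 0 "x$i"]
        mult_right_mono[OF mf_le_mfi[of i] zero_le_power2[of "x$i"]]
      by simp
  qed
  then show ?thesis
    by (simp add: fsum_def sum.distrib gradf_def inner_vec_def norm_vec_power2 sum_distrib_left)
qed

lemma fsum_midpoint:
  "fsum f k ((1/2) *\<^sub>R (a + b)) \<le> (fsum f k a + fsum f k b)/2 - mf/8 * (norm (a - b))\<^sup>2"
proof -
  have "(\<Sum>i\<in>UNIV. f k i ((a$i + b$i)/2))
      \<le> (\<Sum>i\<in>UNIV. (f k i (a$i) + f k i (b$i))/2 - mf/8 * (a$i - b$i)\<^sup>2)"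
  proof (rule sum_mono)
    fix i
    show "f k i ((a$i + b$i)/2) \<le> (f k i (a$i) + f k i (b$i))/2 - mf/8 * (a$i - b$i)\<^sup>2"
      using strongly_convex_midpoint[OF f_strong, of k i "a$i" "b$i"]
        mult_right_mono[OF mf_le_mfi[of i] zero_le_power2[of "a$i - b$i"]]
      by simp
  qed
  then show ?thesis
    by (simp add: fsum_def add_divide_distrib sum.distrib sum_subtractf norm_vec_power2
        sum_distrib_left sum_divide_distrib)
qed

lemma fsum_upper_bound:
  "fsum f k (p + t *\<^sub>R d) - fsum f k p \<le> t * (gradf f k p \<bullet> d) + t\<^sup>2 * (Lf * (norm d)\<^sup>2)"
proof -
  have "(\<Sum>i\<in>UNIV. f k i (p$i + t * d$i) - f k i (p$i))
      \<le> (\<Sum>i\<in>UNIV. deriv (f k i) (p$i) * (t * d$i) + Lf * (t * d$i)\<^sup>2)"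
  proof (rule sum_mono)
    fix i
    show "f k i (p$i + t * d$i) - f k i (p$i) \<le> deriv (f k i) (p$i) * (t * d$i) + Lf * (t * d$i)\<^sup>2"
      using smooth_convex_upper_bound[OF f_diff f_strong less_imp_le[OF mfi_pos] f_smooth,
          of k i "p$i" "t * d$i"]
        mult_right_mono[OF Lfi_le_Lf[of i] zero_le_power2[of "t * d$i"]]
      by simp
  qed
  then show ?thesis
    by (simp add: fsum_def sum_subtractf sum.distrib gradf_def inner_vec_def norm_vec_power2
        sum_distrib_left power_mult_distrib algebra_simps)
qed

lemma quadratic_form_W_le: "x \<bullet> (W *v x) \<le> (norm x)\<^sup>2"
  by (rule doubly_stochastic_quadratic_form_le[OF W_nonneg W_rows W_cols])

lemma quadratic_form_I_minus_W_nonneg: "0 \<le> x \<bullet> ((mat 1 - W) *v x)"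
  using quadratic_form_W_le[of x]
  by (simp add: matrix_vector_mult_diff_rdistrib inner_diff_right power2_norm_eq_inner)

lemma lambda_min_W_le_1: "lambda_min W \<le> 1"
proof -
  have "W *v 1 = 1 *s (1::real^'n)"
    by (simp add: matrix_vector_mult_def vec_eq_iff W_rows)
  moreover have "(1::real^'n) \<noteq> 0"
    by (simp add: vec_eq_iff)
  ultimately have "1 \<in> {l. \<exists>v::real^'n. v \<noteq> 0 \<and> W *v v = l *s v}"
    by blast
  then show ?thesis
    unfolding lambda_min_def by (rule Min_le[OF symmetric_matrix_eigenvalues_finite[OF W_sym]])
qed

abbreviation prox_obj :: "nat \<Rightarrow> real^'n \<Rightarrow> real^'n \<Rightarrow> real" where
  "prox_obj k y x \<equiv> gsum g k x + (norm (x - y))\<^sup>2 / (2 * \<alpha>)"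

lemma prox_unique: "\<exists>!p. \<forall>z. prox_obj k y p \<le> prox_obj k y z"
proof (rule unique_minimizer[where a = "1 / (2 * \<alpha>)" and b = "Lg + norm y / \<alpha>"
      and c = "gsum g k 0" and \<mu> = "1 / (8 * \<alpha>)"])
  show "continuous_on UNIV (prox_obj k y)"
    using alpha_pos by (auto intro!: continuous_intros continuous_on_gsum)
  fix x p q :: "real^'n"
  have "gsum g k 0 - Lg * norm x \<le> gsum g k x"
    using gsum_lipschitz[of k x 0] by simp
  moreover have "(norm x)\<^sup>2 - 2 * norm y * norm x \<le> (norm (x - y))\<^sup>2"
  proof -
    have "(norm (x - y))\<^sup>2 = (norm x)\<^sup>2 - 2 * (x \<bullet> y) + (norm y)\<^sup>2"
      by (simp add: power2_norm_eq_inner inner_diff_left inner_diff_right inner_commute)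
    moreover have "x \<bullet> y \<le> norm y * norm x"
      using norm_cauchy_schwarz[of x y] by (simp add: mult.commute)
    ultimately show ?thesis
      using zero_le_power2[of "norm y"] by linarith
  qed
  then have "((norm x)\<^sup>2 - 2 * norm y * norm x) / (2 * \<alpha>) \<le> (norm (x - y))\<^sup>2 / (2 * \<alpha>)"
    using alpha_pos by (simp add: divide_right_mono)
  moreover have "((norm x)\<^sup>2 - 2 * norm y * norm x) / (2 * \<alpha>)
      = 1 / (2 * \<alpha>) * (norm x)\<^sup>2 - (norm y / \<alpha>) * norm x"
    using alpha_pos by (simp add: field_simps)
  ultimately show "1 / (2 * \<alpha>) * (norm x)\<^sup>2 - (Lg + norm y / \<alpha>) * norm x + gsum g k 0
      \<le> prox_obj k y x"
    by (simp add: algebra_simps)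
  show "prox_obj k y ((1/2) *\<^sub>R (p + q))
      \<le> (prox_obj k y p + prox_obj k y q) / 2 - 1 / (8 * \<alpha>) * (norm (p - q))\<^sup>2"
  proof -
    define m where "m = (1/2) *\<^sub>R (p + q)"
    define Q where "Q x = (norm (x - y))\<^sup>2 / (2 * \<alpha>)" for x
    define D where "D = 1 / (8 * \<alpha>) * (norm (p - q))\<^sup>2"
    have "((a + b) / 2 - c / 4) / (2 * \<alpha>) = (a / (2 * \<alpha>) + b / (2 * \<alpha>)) / 2 - 1 / (8 * \<alpha>) * c"
      for a b c :: real
      using alpha_pos by (simp add: field_simps)
    then have "Q m = (Q p + Q q) / 2 - D"
      unfolding Q_def D_def m_def norm_midpoint_diff_power2 .
    moreover have "gsum g k m \<le> (gsum g k p + gsum g k q) / 2"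
      unfolding m_def by (rule convex_on_midpoint[OF gsum_convex])
    ultimately have "gsum g k m + Q m \<le> (gsum g k p + gsum g k q) / 2 + ((Q p + Q q) / 2 - D)"
      by (intro add_mono) simp_all
    also have "\<dots> = (gsum g k p + Q p + (gsum g k q + Q q)) / 2 - D"
      by (simp add: add_divide_distrib)
    finally have "gsum g k m + Q m \<le> (gsum g k p + Q p + (gsum g k q + Q q)) / 2 - D" .
    then show ?thesis
      by (simp only: m_def Q_def D_def)
  qed
qed (use alpha_pos in simp_all)

lemma prox_minimal: "prox_obj k y (prox (gsum g k) \<alpha> y) \<le> prox_obj k y z"
  using theI'[OF prox_unique] unfolding prox_def by blast

lemma prox_eqI: "(\<And>z. prox_obj k y p \<le> prox_obj k y z) \<Longrightarrow> prox (gsum g k) \<alpha> y = p"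
  unfolding prox_def by (rule the1_equality[OF prox_unique]) blast

lemma prox_variational_inequality:
  fixes k :: nat and y z :: "real^'n"
  defines "p \<equiv> prox (gsum g k) \<alpha> y"
  shows "0 \<le> gsum g k z - gsum g k p + ((p - y) \<bullet> (z - p)) / \<alpha>"
proof -
  have "0 \<le> gsum g k (p + (z - p)) - gsum g k p + ((p - y) \<bullet> (z - p)) / \<alpha>"
  proof (rule minimizer_variational_inequality[where Q = "\<lambda>x. (norm (x - y))\<^sup>2 / (2 * \<alpha>)"
        and C = "(norm (z - p))\<^sup>2 / (2 * \<alpha>)"])
    show "gsum g k p + (norm (p - y))\<^sup>2 / (2 * \<alpha>) \<le> gsum g k w + (norm (w - y))\<^sup>2 / (2 * \<alpha>)" for w
      unfolding p_def by (rule prox_minimal)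
    fix t :: real
    have "p + t *\<^sub>R (z - p) - y = (p - y) + t *\<^sub>R (z - p)"
      by simp
    then show "(norm (p + t *\<^sub>R (z - p) - y))\<^sup>2 / (2 * \<alpha>) - (norm (p - y))\<^sup>2 / (2 * \<alpha>)
        \<le> t * (((p - y) \<bullet> (z - p)) / \<alpha>) + t\<^sup>2 * ((norm (z - p))\<^sup>2 / (2 * \<alpha>))"
      using alpha_pos by (simp only: norm_add_scaleR_power2) (simp add: field_simps)
  qed (rule gsum_convex)
  then show ?thesis by simp
qed

lemma prox_eq_if_variational_inequality:
  assumes "\<And>z. 0 \<le> gsum g k z - gsum g k p + ((p - y) \<bullet> (z - p)) / \<alpha>"
  shows "prox (gsum g k) \<alpha> y = p"
proof (rule prox_eqI)
  fix z
  have "z - y = (p - y) + 1 *\<^sub>R (z - p)"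
    by simp
  then have "(norm (z - y))\<^sup>2 = (norm (p - y))\<^sup>2 + 2 * ((p - y) \<bullet> (z - p)) + (norm (z - p))\<^sup>2"
    by (simp only: norm_add_scaleR_power2) simp
  then have "((p - y) \<bullet> (z - p)) / \<alpha> \<le> ((norm (z - y))\<^sup>2 - (norm (p - y))\<^sup>2) / (2 * \<alpha>)"
    using alpha_pos by (simp add: field_simps)
  with assms[of z] show "prox_obj k y p \<le> prox_obj k y z"
    by (simp add: diff_divide_distrib)
qed

lemma prox_nonexpansive:
  "norm (prox (gsum g k) \<alpha> y1 - prox (gsum g k) \<alpha> y2) \<le> norm (y1 - y2)"
proof -
  define p1 where "p1 = prox (gsum g k) \<alpha> y1"
  define p2 where "p2 = prox (gsum g k) \<alpha> y2"
  have "0 \<le> ((p1 - y1) \<bullet> (p2 - p1)) / \<alpha> + ((p2 - y2) \<bullet> (p1 - p2)) / \<alpha>"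
    using prox_variational_inequality[where k = k and y = y1 and z = p2]
      prox_variational_inequality[where k = k and y = y2 and z = p1]
    unfolding p1_def p2_def by linarith
  then have "0 \<le> (p1 - y1) \<bullet> (p2 - p1) + (p2 - y2) \<bullet> (p1 - p2)"
    using alpha_pos by (simp add: add_divide_distrib[symmetric] zero_le_divide_iff)
  then have "(norm (p1 - p2))\<^sup>2 \<le> (y1 - y2) \<bullet> (p1 - p2)"
    by (simp add: power2_norm_eq_inner inner_diff_left inner_diff_right inner_commute)
  also have "\<dots> \<le> norm (y1 - y2) * norm (p1 - p2)"
    by (rule norm_cauchy_schwarz)
  finally show ?thesis
    unfolding p1_def[symmetric] p2_def[symmetric]
    by (cases "p1 = p2") (simp_all add: power2_eq_square)
qed

lemma norm_prox_diff_le: "norm (prox (gsum g k) \<alpha> y - y) \<le> \<alpha> * Lg"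
proof -
  define p where "p = prox (gsum g k) \<alpha> y"
  have "(p - y) \<bullet> (y - p) = - (norm (p - y))\<^sup>2"
    by (simp add: power2_norm_eq_inner inner_diff_left inner_diff_right inner_commute)
  then have "(norm (p - y))\<^sup>2 / \<alpha> \<le> gsum g k y - gsum g k p"
    using prox_variational_inequality[where k = k and y = y and z = y] unfolding p_def[symmetric]
    by simp
  then have "(norm (p - y))\<^sup>2 \<le> \<alpha> * (gsum g k y - gsum g k p)"
    using alpha_pos by (simp add: field_simps)
  also have "\<dots> \<le> \<alpha> * (Lg * norm (p - y))"
    using gsum_lipschitz[of k y p] alpha_pos by (simp add: norm_minus_commute mult_left_mono)
  finally have "norm (p - y) * norm (p - y) \<le> (\<alpha> * Lg) * norm (p - y)"
    by (simp add: power2_eq_square mult.assoc)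
  then show ?thesis
    unfolding p_def[symmetric] using alpha_pos Lg_nonneg
    by (cases "p = y") simp_all
qed

abbreviation tilde_obj :: "nat \<Rightarrow> real^'n \<Rightarrow> real" where
  "tilde_obj k x \<equiv> phi W \<alpha> f k x + \<alpha> * gsum g k x"

lemma xtilde_unique: "\<exists>!p. \<forall>z. tilde_obj k p \<le> tilde_obj k z"
proof (rule unique_minimizer[where a = "\<alpha> * mf / 2" and b = "\<alpha> * norm (gradf f k 0) + \<alpha> * Lg"
      and c = "\<alpha> * fsum f k 0 + \<alpha> * gsum g k 0" and \<mu> = "\<alpha> * mf / 8"])
  show "continuous_on UNIV (tilde_obj k)"
    unfolding phi_def
    by (intro continuous_intros linear_continuous_on matrix_vector_mul_bounded_linear
        continuous_on_fsum continuous_on_gsum)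
  fix x p q :: "real^'n"
  have "- (norm (gradf f k 0) * norm x) \<le> gradf f k 0 \<bullet> x"
    using norm_cauchy_schwarz[of "- gradf f k 0" x] by simp
  then have "fsum f k 0 - norm (gradf f k 0) * norm x + mf/2 * (norm x)\<^sup>2 \<le> fsum f k x"
    using fsum_lower_bound[of k x] by linarith
  moreover have "gsum g k 0 - Lg * norm x \<le> gsum g k x"
    using gsum_lipschitz[of k x 0] by simp
  ultimately have "\<alpha> * (fsum f k 0 - norm (gradf f k 0) * norm x + mf/2 * (norm x)\<^sup>2)
        + \<alpha> * (gsum g k 0 - Lg * norm x) \<le> \<alpha> * fsum f k x + \<alpha> * gsum g k x"
    using alpha_pos by (intro add_mono mult_left_mono) auto
  then show "\<alpha> * mf / 2 * (norm x)\<^sup>2 - (\<alpha> * norm (gradf f k 0) + \<alpha> * Lg) * norm x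
      + (\<alpha> * fsum f k 0 + \<alpha> * gsum g k 0) \<le> tilde_obj k x"
    using quadratic_form_I_minus_W_nonneg[of x] unfolding phi_def by (simp add: algebra_simps)
  let ?m = "(1/2) *\<^sub>R (p + q)"
  have "?m \<bullet> ((mat 1 - W) *v ?m)
      = (p \<bullet> ((mat 1 - W) *v p) + q \<bullet> ((mat 1 - W) *v q)) / 2 - ((p - q) \<bullet> ((mat 1 - W) *v (p - q))) / 4"
    by (simp add: matrix_vector_right_distrib matrix_vector_mult_diff_distrib
        matrix_vector_mult_scaleR inner_add_left inner_add_right inner_diff_left inner_diff_right
        field_simps)
  then have "?m \<bullet> ((mat 1 - W) *v ?m) \<le> (p \<bullet> ((mat 1 - W) *v p) + q \<bullet> ((mat 1 - W) *v q)) / 2"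
    using quadratic_form_I_minus_W_nonneg[of "p - q"] by linarith
  moreover have "\<alpha> * fsum f k ?m \<le> \<alpha> * ((fsum f k p + fsum f k q)/2 - mf/8 * (norm (p - q))\<^sup>2)"
    using fsum_midpoint alpha_pos by (simp add: mult_left_mono)
  moreover have "\<alpha> * gsum g k ?m \<le> \<alpha> * ((gsum g k p + gsum g k q)/2)"
    using convex_on_midpoint[OF gsum_convex] alpha_pos by (simp add: mult_left_mono)
  ultimately show "tilde_obj k ?m \<le> (tilde_obj k p + tilde_obj k q)/2 - \<alpha> * mf / 8 * (norm (p - q))\<^sup>2"
    unfolding phi_def by (simp add: algebra_simps)
qed (use alpha_pos mf_pos in simp_all)

lemma xtilde_minimal: "tilde_obj k (xtilde W \<alpha> f g k) \<le> tilde_obj k z"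
  using theI'[OF xtilde_unique] unfolding xtilde_def by blast

lemma xtilde_variational_inequality:
  fixes k :: nat and d :: "real^'n"
  defines "p \<equiv> xtilde W \<alpha> f g k"
  shows "0 \<le> \<alpha> * gsum g k (p + d) - \<alpha> * gsum g k p + d \<bullet> ((mat 1 - W) *v p + \<alpha> *\<^sub>R gradf f k p)"
proof (rule minimizer_variational_inequality[where Q = "phi W \<alpha> f k"
      and C = "(1/2) * (d \<bullet> ((mat 1 - W) *v d)) + \<alpha> * (Lf * (norm d)\<^sup>2)"])
  show "\<alpha> * gsum g k p + phi W \<alpha> f k p \<le> \<alpha> * gsum g k z + phi W \<alpha> f k z" for z
    using xtilde_minimal[of k z] unfolding p_def by (simp add: add.commute)
  show "convex_on UNIV (\<lambda>x. \<alpha> * gsum g k x)"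
    using alpha_pos gsum_convex by (intro convex_on_cmul) auto
  fix t :: real
  let ?B = "mat 1 - W"
  have "p \<bullet> (W *v d) = d \<bullet> (W *v p)"
    using symmetric_matrix_inner_commute[OF W_sym, of p d] by (simp add: inner_commute)
  then have "(p + t *\<^sub>R d) \<bullet> (?B *v (p + t *\<^sub>R d))
      = p \<bullet> (?B *v p) + 2 * t * (d \<bullet> (?B *v p)) + t\<^sup>2 * (d \<bullet> (?B *v d))"
    by (simp add: matrix_vector_mult_diff_rdistrib matrix_vector_right_distrib
        matrix_vector_mult_scaleR inner_add_left inner_add_right inner_diff_right inner_commute
        power2_eq_square algebra_simps)
  then have "phi W \<alpha> f k (p + t *\<^sub>R d) - phi W \<alpha> f k p
      = t * (d \<bullet> (?B *v p)) + t\<^sup>2 * ((1/2) * (d \<bullet> (?B *v d))) + \<alpha> * (fsum f k (p + t *\<^sub>R d) - fsum f k p)"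
    unfolding phi_def by (simp add: algebra_simps)
  also have "\<dots> \<le> t * (d \<bullet> (?B *v p)) + t\<^sup>2 * ((1/2) * (d \<bullet> (?B *v d)))
      + \<alpha> * (t * (gradf f k p \<bullet> d) + t\<^sup>2 * (Lf * (norm d)\<^sup>2))"
    using fsum_upper_bound[of k p t d] alpha_pos by (simp add: mult_left_mono)
  also have "\<dots> = t * (d \<bullet> (?B *v p + \<alpha> *\<^sub>R gradf f k p))
      + t\<^sup>2 * ((1/2) * (d \<bullet> (?B *v d)) + \<alpha> * (Lf * (norm d)\<^sup>2))"
    by (simp add: inner_add_right inner_commute algebra_simps)
  finally show "phi W \<alpha> f k (p + t *\<^sub>R d) - phi W \<alpha> f k p
      \<le> t * (d \<bullet> (?B *v p + \<alpha> *\<^sub>R gradf f k p))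
        + t\<^sup>2 * ((1/2) * (d \<bullet> (?B *v d)) + \<alpha> * (Lf * (norm d)\<^sup>2))" .
qed

lemma prox_step_xtilde:
  fixes k :: nat
  defines "p \<equiv> xtilde W \<alpha> f g k"
  shows "prox (gsum g k) \<alpha> (W *v p - \<alpha> *\<^sub>R gradf f k p) = p"
proof (rule prox_eq_if_variational_inequality)
  fix z
  have step: "p - (W *v p - \<alpha> *\<^sub>R gradf f k p) = (mat 1 - W) *v p + \<alpha> *\<^sub>R gradf f k p"
    by (simp add: matrix_vector_mult_diff_rdistrib)
  have "\<alpha> * (gsum g k z - gsum g k p + ((p - (W *v p - \<alpha> *\<^sub>R gradf f k p)) \<bullet> (z - p)) / \<alpha>)
      = \<alpha> * gsum g k (p + (z - p)) - \<alpha> * gsum g k p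
        + (z - p) \<bullet> ((mat 1 - W) *v p + \<alpha> *\<^sub>R gradf f k p)"
    unfolding step using alpha_pos by (simp add: inner_commute field_simps)
  also have "0 \<le> \<dots>"
    using xtilde_variational_inequality[of k "z - p"] unfolding p_def by simp
  finally show "0 \<le> gsum g k z - gsum g k p + ((p - (W *v p - \<alpha> *\<^sub>R gradf f k p)) \<bullet> (z - p)) / \<alpha>"
    using alpha_pos by (simp add: zero_le_mult_iff)
qed

lemma norm_gradf_xtilde_le:
  fixes k :: nat
  defines "p \<equiv> xtilde W \<alpha> f g k"
  shows "\<alpha> * norm (gradf f k p) \<le> \<alpha> * Lg + norm ((mat 1 - W) *v p)"
proof -
  let ?y = "W *v p - \<alpha> *\<^sub>R gradf f k p"
  have "\<alpha> *\<^sub>R gradf f k p = (prox (gsum g k) \<alpha> ?y - ?y) - (mat 1 - W) *v p"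
    using prox_step_xtilde[of k] unfolding p_def[symmetric]
    by (simp add: matrix_vector_mult_diff_rdistrib)
  then have "norm (\<alpha> *\<^sub>R gradf f k p) \<le> norm (prox (gsum g k) \<alpha> ?y - ?y) + norm ((mat 1 - W) *v p)"
    by (metis norm_triangle_ineq4)
  then show ?thesis
    using norm_prox_diff_le[of k ?y] alpha_pos by simp
qed

abbreviation star_obj :: "nat \<Rightarrow> real \<Rightarrow> real" where
  "star_obj k y \<equiv> \<Sum>i\<in>UNIV. f k i y + g k i y"

lemma convex_on_sum_g: "convex_on UNIV (\<lambda>y. \<Sum>i\<in>UNIV. g k i y)"
proof (rule convex_onI)
  fix t x y :: real
  assume t: "0 < t" "t < 1"
  have "(\<Sum>i\<in>UNIV. g k i ((1 - t) *\<^sub>R x + t *\<^sub>R y)) \<le> (\<Sum>i\<in>UNIV. (1 - t) * g k i x + t * g k i y)"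
    by (rule sum_mono, rule convex_onD[OF g_convex]) (use t in auto)
  then show "(\<Sum>i\<in>UNIV. g k i ((1 - t) *\<^sub>R x + t *\<^sub>R y))
      \<le> (1 - t) * (\<Sum>i\<in>UNIV. g k i x) + t * (\<Sum>i\<in>UNIV. g k i y)"
    by (simp add: sum.distrib sum_distrib_left)
qed simp

lemma xstar_unique: "\<exists>!p. \<forall>z. star_obj k p \<le> star_obj k z"
proof -
  obtain C where C: "\<And>i k. (C i)-lipschitz_on UNIV (g k i)"
    using g_lip by metis
  show ?thesis
  proof (rule unique_minimizer[where a = "\<Sum>i\<in>UNIV. mfi i / 2"
        and b = "\<Sum>i\<in>UNIV. C i + \<bar>deriv (f k i) 0\<bar>" and c = "\<Sum>i\<in>UNIV. f k i 0 + g k i 0"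
        and \<mu> = "\<Sum>i\<in>UNIV. mfi i / 8"])
    have "continuous_on UNIV (f k i)" for i
      by (metis f_diff differentiable_imp_continuous_within continuous_at_imp_continuous_on)
    then show "continuous_on UNIV (star_obj k)"
      by (intro continuous_on_sum continuous_intros lipschitz_on_continuous_on[OF C])
    fix y p q :: real
    have "(\<Sum>i\<in>UNIV. (f k i 0 + g k i 0) + mfi i / 2 * (norm y)\<^sup>2 - (C i + \<bar>deriv (f k i) 0\<bar>) * norm y)
        \<le> star_obj k y"
    proof (rule sum_mono)
      fix i
      have "g k i 0 - C i * \<bar>y\<bar> \<le> g k i y"
        using lipschitz_on_normD[OF C[of i k], of y 0] by simp
      moreover have "- (\<bar>deriv (f k i) 0\<bar> * \<bar>y\<bar>) \<le> deriv (f k i) 0 * y"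
        using abs_ge_minus_self[of "deriv (f k i) 0 * y"] by (simp add: abs_mult)
      ultimately show "(f k i 0 + g k i 0) + mfi i / 2 * (norm y)\<^sup>2 - (C i + \<bar>deriv (f k i) 0\<bar>) * norm y
          \<le> f k i y + g k i y"
        using strongly_convex_above_tangent[OF f_diff f_strong, of k i 0 y]
        by (simp add: algebra_simps)
    qed
    then show "(\<Sum>i\<in>UNIV. mfi i / 2) * (norm y)\<^sup>2 - (\<Sum>i\<in>UNIV. C i + \<bar>deriv (f k i) 0\<bar>) * norm y
        + (\<Sum>i\<in>UNIV. f k i 0 + g k i 0) \<le> star_obj k y"
      by (simp add: sum.distrib sum_subtractf sum_distrib_right distrib_right)
    have "star_obj k ((1/2) *\<^sub>R (p + q))
        \<le> (\<Sum>i\<in>UNIV. (f k i p + g k i p + (f k i q + g k i q)) / 2 - mfi i / 8 * (p - q)\<^sup>2)"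
    proof (rule sum_mono)
      fix i
      show "f k i ((1/2) *\<^sub>R (p + q)) + g k i ((1/2) *\<^sub>R (p + q))
          \<le> (f k i p + g k i p + (f k i q + g k i q)) / 2 - mfi i / 8 * (p - q)\<^sup>2"
        using strongly_convex_midpoint[OF f_strong, of k i p q]
          convex_on_midpoint[OF g_convex, of k i p q]
        by (simp add: field_simps)
    qed
    then show "star_obj k ((1/2) *\<^sub>R (p + q))
        \<le> (star_obj k p + star_obj k q) / 2 - (\<Sum>i\<in>UNIV. mfi i / 8) * (norm (p - q))\<^sup>2"
      by (simp add: add_divide_distrib sum_subtractf sum_divide_distrib sum.distrib
          sum_distrib_right)
  qed (use mfi_pos in \<open>auto intro!: sum_pos\<close>)
qed

lemma xstar_minimal: "star_obj k (xstar f g k) \<le> star_obj k z"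
  using theI'[OF xstar_unique] unfolding xstar_def by blast

text \<open>
  The optimality condition of \<open>x\<^sup>*\<close>: the total derivative of \<open>f\<close> is a subgradient of \<open>-\<Sum>\<^sub>i g\<^sub>i\<close>,
  hence bounded by the Lipschitz constant of \<open>g\<close> along the consensus direction \<open>\<one>\<close>,
  of norm \<open>\<surd>N\<close>.
\<close>
lemma abs_sum_deriv_f_xstar_le:
  "\<bar>\<Sum>i\<in>UNIV. deriv (f k i) (xstar f g k)\<bar> \<le> Lg * sqrt (real CARD('n))"
proof -
  let ?p = "xstar f g k"
  let ?S = "\<Sum>i\<in>UNIV. deriv (f k i) ?p"
  have "0 \<le> (\<Sum>i\<in>UNIV. g k i (?p + - ?S)) - (\<Sum>i\<in>UNIV. g k i ?p) + ?S * - ?S"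
  proof (rule minimizer_variational_inequality[where Q = "\<lambda>y. \<Sum>i\<in>UNIV. f k i y"
        and C = "(\<Sum>i\<in>UNIV. Lfi i) * ?S\<^sup>2"])
    show "(\<Sum>i\<in>UNIV. g k i ?p) + (\<Sum>i\<in>UNIV. f k i ?p) \<le> (\<Sum>i\<in>UNIV. g k i z) + (\<Sum>i\<in>UNIV. f k i z)" for z
      using xstar_minimal[of k z] by (simp add: sum.distrib add.commute)
    fix t :: real
    have "(\<Sum>i\<in>UNIV. f k i (?p + t * - ?S) - f k i ?p)
        \<le> (\<Sum>i\<in>UNIV. deriv (f k i) ?p * (t * - ?S) + Lfi i * (t * - ?S)\<^sup>2)"
      by (rule sum_mono, rule smooth_convex_upper_bound[OF f_diff f_strong less_imp_le[OF mfi_pos]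
            f_smooth])
    also have "\<dots> = ?S * (t * - ?S) + (\<Sum>i\<in>UNIV. Lfi i) * (t * - ?S)\<^sup>2"
      by (simp only: sum.distrib sum_distrib_right)
    also have "\<dots> = t * (?S * - ?S) + t\<^sup>2 * ((\<Sum>i\<in>UNIV. Lfi i) * ?S\<^sup>2)"
      by (simp add: power2_eq_square algebra_simps)
    finally show "(\<Sum>i\<in>UNIV. f k i (?p + t *\<^sub>R - ?S)) - (\<Sum>i\<in>UNIV. f k i ?p)
        \<le> t * (?S * - ?S) + t\<^sup>2 * ((\<Sum>i\<in>UNIV. Lfi i) * ?S\<^sup>2)"
      by (simp add: sum_subtractf)
  qed (rule convex_on_sum_g)
  then have "?S\<^sup>2 \<le> (\<Sum>i\<in>UNIV. g k i (?p - ?S)) - (\<Sum>i\<in>UNIV. g k i ?p)"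
    by (simp add: power2_eq_square)
  also have "\<dots> = gsum g k ((\<chi> i. ?p - ?S)::real^'n) - gsum g k (\<chi> i. ?p)"
    by (simp add: gsum_def)
  also have "\<dots> \<le> Lg * norm (((\<chi> i. ?p - ?S)::real^'n) - (\<chi> i. ?p))"
    by (rule order_trans[OF abs_ge_self gsum_lipschitz])
  also have "((\<chi> i. ?p - ?S)::real^'n) - (\<chi> i. ?p) = (\<chi> i. - ?S)"
    by (simp add: vec_eq_iff)
  also have "norm ((\<chi> i. - ?S)::real^'n) = sqrt (real CARD('n)) * \<bar>?S\<bar>"
    by (simp add: norm_const_vec)
  finally have "\<bar>?S\<bar> * \<bar>?S\<bar> \<le> (Lg * sqrt (real CARD('n))) * \<bar>?S\<bar>"
    by (simp add: power2_eq_square abs_mult_self_eq algebra_simps)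
  then show ?thesis
  proof (cases "?S = 0")
    case False
    then have "0 < \<bar>?S\<bar>" by simp
    with \<open>\<bar>?S\<bar> * \<bar>?S\<bar> \<le> (Lg * sqrt (real CARD('n))) * \<bar>?S\<bar>\<close> show ?thesis
      by (simp only: mult_le_cancel_right_pos)
  qed (use Lg_nonneg in simp)
qed

definition mean_deriv :: "nat \<Rightarrow> real \<Rightarrow> real" where
  "mean_deriv k t = (\<Sum>j\<in>UNIV. deriv (f k j) t) / real CARD('n)"

lemma avg_mat_gradf_const: "avg_mat *v gradf f k (\<chi> i. t) = (\<chi> i. mean_deriv k t)"
  by (simp add: avg_mat_mult_vec gradf_def mean_deriv_def)

lemma mean_deriv_monotone: "mf * (a - z)\<^sup>2 \<le> (mean_deriv k a - mean_deriv k z) * (a - z)"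
proof -
  have "(\<Sum>j\<in>UNIV. (deriv (f k j) a - deriv (f k j) z) * (a - z))
      = ((\<Sum>j\<in>UNIV. deriv (f k j) a) - (\<Sum>j\<in>UNIV. deriv (f k j) z)) * (a - z)"
    by (simp only: sum_distrib_right[symmetric] sum_subtractf)
  then have "(mean_deriv k a - mean_deriv k z) * (a - z)
      = (\<Sum>j\<in>UNIV. (deriv (f k j) a - deriv (f k j) z) * (a - z)) / real CARD('n)"
    by (simp add: mean_deriv_def diff_divide_distrib[symmetric])
  also have "\<dots> \<ge> (\<Sum>j\<in>(UNIV::'n set). mf * (a - z)\<^sup>2) / real CARD('n)"
    by (intro divide_right_mono sum_mono deriv_f_monotone) simp
  finally show ?thesis
    by simp
qed

lemma mean_deriv_lipschitz: "\<bar>mean_deriv k a - mean_deriv k z\<bar> \<le> Lf * \<bar>a - z\<bar>"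
proof -
  have "\<bar>\<Sum>j\<in>UNIV. deriv (f k j) a - deriv (f k j) z\<bar> \<le> (\<Sum>j\<in>(UNIV::'n set). Lf * \<bar>a - z\<bar>)"
    by (rule order_trans[OF sum_abs sum_mono[OF deriv_f_lipschitz]])
  then show ?thesis
    by (simp add: mean_deriv_def sum_subtractf diff_divide_distrib[symmetric] field_simps)
qed

lemma norm_mean_deriv_xstar_le: "norm ((\<chi> i. mean_deriv k (xstar f g k))::real^'n) \<le> Lg"
proof -
  define N where "N = real CARD('n)"
  have "0 < N" by (simp add: N_def)
  have "norm ((\<chi> i. mean_deriv k (xstar f g k))::real^'n)
      = sqrt N * (\<bar>\<Sum>j\<in>UNIV. deriv (f k j) (xstar f g k)\<bar> / N)"
    using \<open>0 < N\<close> by (simp add: norm_const_vec N_def mean_deriv_def)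
  also have "\<dots> \<le> sqrt N * (Lg * sqrt N / N)"
    using abs_sum_deriv_f_xstar_le[of k] \<open>0 < N\<close> unfolding N_def
    by (intro mult_left_mono divide_right_mono) auto
  also have "\<dots> = Lg"
    using \<open>0 < N\<close> by (simp add: field_simps)
  finally show ?thesis .
qed

end

section \<open>One step of the inexact DPGM\<close>

locale dpgm_stepsize = dpgm_problem W f g Lfi mfi Lg \<alpha>
  for W :: "real^'n^'n" and f g :: "nat \<Rightarrow> 'n \<Rightarrow> real \<Rightarrow> real" and Lfi mfi :: "'n \<Rightarrow> real"
    and Lg \<alpha> :: real +
  assumes alpha_lt1: "\<alpha> < (1 + lambda_min W) / Max (range Lfi)"
    and alpha_lt2: "\<alpha> < 2 / (Max (range Lfi) + Min (range mfi))"
begin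

abbreviation "c_rate \<equiv> sqrt (1 - 2 * \<alpha> * mf * Lf / (mf + Lf))"
abbreviation "zeta_phi \<equiv> max \<bar>1 - (1 - lambda_min W + \<alpha> * Lf)\<bar> \<bar>1 - \<alpha> * mf\<bar>"

text \<open>
  The quadratic form of the symmetric matrix \<open>W - \<alpha> diag(\<kappa>)\<close> lies between
  \<open>(\<lambda>\<^sub>m\<^sub>i\<^sub>n(W) - \<alpha> L\<^sub>f) \<parallel>w\<parallel>\<^sup>2\<close> and \<open>(1 - \<alpha> m\<^sub>f) \<parallel>w\<parallel>\<^sup>2\<close>.
\<close>
lemma norm_W_minus_diagonal_le:
  assumes \<kappa>: "\<And>i. mf \<le> \<kappa> i" "\<And>i. \<kappa> i \<le> Lf"
  shows "norm (W *v v - \<alpha> *\<^sub>R (\<chi> i. \<kappa> i * v$i)) \<le> zeta_phi * norm v"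
proof -
  define T where "T = (\<chi> i j. W$i$j - (if i = j then \<alpha> * \<kappa> i else 0))"
  have T_mult: "T *v w = W *v w - \<alpha> *\<^sub>R (\<chi> i. \<kappa> i * w$i)" for w
  proof -
    have "(\<Sum>j\<in>UNIV. (if i = j then \<alpha> * \<kappa> i else 0) * w$j) = \<alpha> * (\<kappa> i * w$i)" for i
      by (simp add: if_distrib[of "\<lambda>c. c * _"] cong: if_cong)
    then show ?thesis
      by (simp add: T_def matrix_vector_mult_def vec_eq_iff left_diff_distrib sum_subtractf)
  qed
  have "transpose T = T"
    using W_sym by (simp add: T_def transpose_def vec_eq_iff)
  moreover have "\<bar>w \<bullet> (T *v w)\<bar> \<le> zeta_phi * (norm w)\<^sup>2" for w
  proof -
    have "w \<bullet> (\<chi> i. \<kappa> i * w$i) = (\<Sum>i\<in>UNIV. \<kappa> i * (w$i)\<^sup>2)"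
      by (simp add: inner_vec_def power2_eq_square mult.commute mult.left_commute)
    then have T_quad: "w \<bullet> (T *v w) = w \<bullet> (W *v w) - \<alpha> * (\<Sum>i\<in>UNIV. \<kappa> i * (w$i)\<^sup>2)"
      by (simp add: T_mult inner_diff_right)
    have "\<alpha> * (mf * (norm w)\<^sup>2) \<le> \<alpha> * (\<Sum>i\<in>UNIV. \<kappa> i * (w$i)\<^sup>2)"
      unfolding norm_vec_power2 sum_distrib_left using alpha_pos \<kappa>(1)
      by (intro mult_left_mono sum_mono mult_right_mono) auto
    then have upper: "w \<bullet> (T *v w) \<le> (1 - \<alpha> * mf) * (norm w)\<^sup>2"
      using quadratic_form_W_le[of w] T_quad by (simp add: algebra_simps)
    have "\<alpha> * (\<Sum>i\<in>UNIV. \<kappa> i * (w$i)\<^sup>2) \<le> \<alpha> * (Lf * (norm w)\<^sup>2)"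
      unfolding norm_vec_power2 sum_distrib_left using alpha_pos \<kappa>(2)
      by (intro mult_left_mono sum_mono mult_right_mono) auto
    then have lower: "(lambda_min W - \<alpha> * Lf) * (norm w)\<^sup>2 \<le> w \<bullet> (T *v w)"
      using lambda_min_le_quadratic_form[OF W_sym, of w] T_quad by (simp add: algebra_simps)
    have "- zeta_phi * (norm w)\<^sup>2 \<le> (lambda_min W - \<alpha> * Lf) * (norm w)\<^sup>2"
      by (intro mult_right_mono) auto
    moreover have "(1 - \<alpha> * mf) * (norm w)\<^sup>2 \<le> zeta_phi * (norm w)\<^sup>2"
      by (intro mult_right_mono) auto
    ultimately show ?thesis
      using upper lower by (simp add: abs_le_iff)
  qed
  ultimately have "norm (T *v v) \<le> zeta_phi * norm v"
    by (rule norm_symmetric_matrix_le)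
  then show ?thesis
    by (simp add: T_mult)
qed

lemma norm_W_minus_gradient_difference_le:
  fixes v u :: "real^'n"
  assumes mono: "\<And>i. mf * (v$i)\<^sup>2 \<le> u$i * v$i" and lip: "\<And>i. \<bar>u$i\<bar> \<le> Lf * \<bar>v$i\<bar>"
  shows "norm (W *v v - \<alpha> *\<^sub>R u) \<le> zeta_phi * norm v"
proof -
  define \<kappa> where "\<kappa> i = (if v$i = 0 then mf else u$i / v$i)" for i
  have uk: "u$i = \<kappa> i * v$i" for i
    using lip[of i] by (cases "v$i = 0") (auto simp: \<kappa>_def)
  then have u: "u = (\<chi> i. \<kappa> i * v$i)"
    by (simp add: vec_eq_iff)
  have "mf \<le> \<kappa> i \<and> \<kappa> i \<le> Lf" for i
  proof (cases "v$i = 0")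
    case False
    have "mf * (v$i)\<^sup>2 \<le> \<kappa> i * (v$i)\<^sup>2"
      using mono[of i] uk[of i] by (simp add: power2_eq_square mult.assoc)
    then have "mf \<le> \<kappa> i"
      using False by (simp add: mult_le_cancel_right)
    moreover have "\<bar>\<kappa> i\<bar> * \<bar>v$i\<bar> \<le> Lf * \<bar>v$i\<bar>"
      using lip[of i] uk[of i] by (simp add: abs_mult)
    then have "\<bar>\<kappa> i\<bar> \<le> Lf"
      using False by (simp add: mult_le_cancel_right)
    ultimately show ?thesis by simp
  qed (use mf_le_Lf in \<open>simp add: \<kappa>_def\<close>)
  then show ?thesis
    unfolding u by (intro norm_W_minus_diagonal_le) auto
qed

lemma norm_dpgm_step_minus_xtilde_le:
  "norm (dpgm_step W \<alpha> f g k e x - xtilde W \<alpha> f g k) \<le> zeta_phi * norm (x - xtilde W \<alpha> f g k) + norm e"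
proof -
  let ?t = "xtilde W \<alpha> f g k"
  let ?y = "\<lambda>z. W *v z - \<alpha> *\<^sub>R gradf f k z"
  have "dpgm_step W \<alpha> f g k e x - ?t = (prox (gsum g k) \<alpha> (?y x) - prox (gsum g k) \<alpha> (?y ?t)) + e"
    using prox_step_xtilde[of k] by (simp add: dpgm_step_def)
  then have "norm (dpgm_step W \<alpha> f g k e x - ?t)
      \<le> norm (prox (gsum g k) \<alpha> (?y x) - prox (gsum g k) \<alpha> (?y ?t)) + norm e"
    by (metis norm_triangle_ineq)
  also have "norm (prox (gsum g k) \<alpha> (?y x) - prox (gsum g k) \<alpha> (?y ?t)) \<le> norm (?y x - ?y ?t)"
    by (rule prox_nonexpansive)
  also have "?y x - ?y ?t = W *v (x - ?t) - \<alpha> *\<^sub>R (gradf f k x - gradf f k ?t)"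
    by (simp add: matrix_vector_mult_diff_distrib scaleR_diff_right)
  also have "norm \<dots> \<le> zeta_phi * norm (x - ?t)"
    by (rule norm_W_minus_gradient_difference_le)
      (simp_all add: gradf_def deriv_f_monotone deriv_f_lipschitz)
  finally show ?thesis by simp
qed

lemma norm_dpgm_step_disagreement_le:
  fixes k :: nat and x e :: "real^'n"
  defines "x' \<equiv> dpgm_step W \<alpha> f g k e x"
  shows "norm (x' - avg_mat *v x') \<le> rhoW W * norm (x - avg_mat *v x)
      + \<alpha> * Lf * norm (x - xtilde W \<alpha> f g k) + (2 * \<alpha> * Lg + norm ((mat 1 - W) *v xtilde W \<alpha> f g k))
      + norm e"
proof -
  let ?t = "xtilde W \<alpha> f g k"
  let ?R = "\<lambda>z. z - avg_mat *v (z::real^'n)"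
  define y where "y = W *v x - \<alpha> *\<^sub>R gradf f k x"
  define P where "P = prox (gsum g k) \<alpha> y"
  \<comment> \<open>\<open>W\<close> commutes with the averaging, so the disagreement is propagated by \<open>W - \<one>\<one>\<^sup>T/N\<close>\<close>
  have "?R (W *v x) = (W - avg_mat) *v ?R x"
    by (simp add: matrix_vector_mult_diff_rdistrib matrix_vector_mult_diff_distrib
        row_stochastic_mult_avg_mat[OF W_rows] avg_mat_mult_column_stochastic[OF W_cols]
        avg_mat_idem)
  then have "?R x' = (W - avg_mat) *v ?R x - \<alpha> *\<^sub>R ?R (gradf f k x) + ?R (P - y) + ?R e"
    by (simp add: x'_def dpgm_step_def P_def y_def matrix_vector_right_distrib
        matrix_vector_mult_diff_distrib matrix_vector_mult_scaleR algebra_simps)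
  then have "norm (?R x') \<le> norm ((W - avg_mat) *v ?R x) + norm (\<alpha> *\<^sub>R ?R (gradf f k x))
      + norm (?R (P - y)) + norm (?R e)"
    using norm_diff_add_add_le by metis
  moreover have "norm ((W - avg_mat) *v ?R x) \<le> rhoW W * norm (?R x)"
    unfolding rhoW_def by (rule onorm) simp
  moreover have "norm (\<alpha> *\<^sub>R ?R (gradf f k x)) \<le> \<alpha> * Lf * norm (x - ?t) + (\<alpha> * Lg + norm ((mat 1 - W) *v ?t))"
  proof -
    have "norm (?R (gradf f k x)) \<le> norm (gradf f k x - gradf f k ?t) + norm (gradf f k ?t)"
      using norm_avg_mat_residual_le[of "gradf f k x"] norm_triangle_sub[of "gradf f k x" "gradf f k ?t"]
      by linarith
    also have "\<dots> \<le> Lf * norm (x - ?t) + norm (gradf f k ?t)"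
      using norm_gradf_diff_le[of k x ?t] by simp
    finally have "\<alpha> * norm (?R (gradf f k x)) \<le> \<alpha> * (Lf * norm (x - ?t)) + \<alpha> * norm (gradf f k ?t)"
      using alpha_pos by (simp add: distrib_left[symmetric] mult_left_mono)
    then show ?thesis
      using norm_gradf_xtilde_le[of k] alpha_pos by (simp add: mult.assoc)
  qed
  moreover have "norm (?R (P - y)) \<le> \<alpha> * Lg"
    using norm_avg_mat_residual_le[of "P - y"] norm_prox_diff_le[of k y] by (simp add: P_def)
  moreover have "norm (?R e) \<le> norm e"
    by (rule norm_avg_mat_residual_le)
  ultimately show ?thesis
    by simp
qed

lemma norm_consensus_gradient_step_le:
  "norm ((\<chi> i. (a - z) - \<alpha> * (mean_deriv k a - mean_deriv k z))::real^'n)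
     \<le> c_rate * norm ((\<chi> i. a - z)::real^'n)"
proof -
  have "\<bar>(a - z) - \<alpha> * (mean_deriv k a - mean_deriv k z)\<bar> \<le> c_rate * \<bar>a - z\<bar>"
    using alpha_lt2 mf_pos mf_le_Lf alpha_pos mean_deriv_monotone mean_deriv_lipschitz
    by (intro gradient_step_contraction) (simp_all add: add.commute)
  then show ?thesis
    by (simp add: norm_const_vec mult_left_mono mult.left_commute)
qed

text \<open>
  The average moves by a gradient step of the averaged cost, compared with the optimality
  condition of \<open>x\<^sup>*\<close>; the last four terms are the errors.
\<close>
lemma avg_mat_dpgm_step_minus_xstar:
  fixes k :: nat and x e :: "real^'n"
  defines "a \<equiv> (\<Sum>j\<in>UNIV. x$j) / real CARD('n)" and "z \<equiv> xstar f g k"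
    and "y \<equiv> W *v x - \<alpha> *\<^sub>R gradf f k x"
  shows "avg_mat *v dpgm_step W \<alpha> f g k e x - xstar_vec f g k
    = (\<chi> i. (a - z) - \<alpha> * (mean_deriv k a - mean_deriv k z))
      - \<alpha> *\<^sub>R (avg_mat *v (gradf f k x - gradf f k (\<chi> i. a))) - \<alpha> *\<^sub>R (\<chi> i. mean_deriv k z)
      + avg_mat *v (prox (gsum g k) \<alpha> y - y) + avg_mat *v e"
proof -
  have "avg_mat *v x = (\<chi> i. a)"
    by (simp add: avg_mat_mult_vec a_def)
  then show ?thesis
    by (simp add: dpgm_step_def y_def z_def xstar_vec_def avg_mat_gradf_const
        avg_mat_mult_column_stochastic[OF W_cols] matrix_vector_right_distrib
        matrix_vector_mult_diff_distrib matrix_vector_mult_scaleR vec_eq_iff algebra_simps)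
qed

lemma norm_dpgm_step_average_le:
  "norm (avg_mat *v dpgm_step W \<alpha> f g k e x - xstar_vec f g k)
    \<le> c_rate * norm (avg_mat *v x - xstar_vec f g k) + \<alpha> * Lf * norm (x - avg_mat *v x)
      + 2 * \<alpha> * Lg + norm e"
proof -
  define a where "a = (\<Sum>j\<in>UNIV. x$j) / real CARD('n)"
  define z where "z = xstar f g k"
  define y where "y = W *v x - \<alpha> *\<^sub>R gradf f k x"
  have avg_x: "avg_mat *v x = (\<chi> i. a)"
    by (simp add: avg_mat_mult_vec a_def)
  have "norm (avg_mat *v dpgm_step W \<alpha> f g k e x - xstar_vec f g k)
      \<le> norm ((\<chi> i. (a - z) - \<alpha> * (mean_deriv k a - mean_deriv k z))::real^'n)
        + norm (\<alpha> *\<^sub>R (avg_mat *v (gradf f k x - gradf f k (\<chi> i. a))))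
        + norm (\<alpha> *\<^sub>R ((\<chi> i. mean_deriv k z)::real^'n))
        + norm (avg_mat *v (prox (gsum g k) \<alpha> y - y)) + norm (avg_mat *v e)"
    unfolding avg_mat_dpgm_step_minus_xstar a_def[symmetric] z_def[symmetric] y_def[symmetric]
    by (rule norm_diff_diff_add_add_le)
  moreover have "avg_mat *v x - xstar_vec f g k = (\<chi> i. a - z)"
    by (simp add: avg_x xstar_vec_def z_def vec_eq_iff)
  then have "norm ((\<chi> i. (a - z) - \<alpha> * (mean_deriv k a - mean_deriv k z))::real^'n)
      \<le> c_rate * norm (avg_mat *v x - xstar_vec f g k)"
    using norm_consensus_gradient_step_le[of a z k] by simp
  moreover have "norm (\<alpha> *\<^sub>R (avg_mat *v (gradf f k x - gradf f k (\<chi> i. a))))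
      \<le> \<alpha> * Lf * norm (x - avg_mat *v x)"
    using order_trans[OF norm_avg_mat_le norm_gradf_diff_le, of k x "\<chi> i. a"] alpha_pos
    by (simp add: avg_x mult_left_mono mult.assoc)
  moreover have "norm (\<alpha> *\<^sub>R ((\<chi> i. mean_deriv k z)::real^'n)) \<le> \<alpha> * Lg"
    using norm_mean_deriv_xstar_le[of k] alpha_pos by (simp add: z_def mult_left_mono)
  moreover have "norm (avg_mat *v (prox (gsum g k) \<alpha> y - y)) \<le> \<alpha> * Lg"
    using norm_avg_mat_le norm_prox_diff_le order_trans by blast
  moreover have "norm (avg_mat *v e) \<le> norm e"
    by (rule norm_avg_mat_le)
  ultimately show ?thesis
    by simp
qed

abbreviation "A_W \<equiv> Amat \<alpha> Lf mf (rhoW W) (lambda_min W)"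

lemma A_W_entries:
  "A_W$1$1 = c_rate" "A_W$1$2 = \<alpha> * Lf" "A_W$1$3 = 0"
  "A_W$2$1 = 0" "A_W$2$2 = rhoW W" "A_W$2$3 = \<alpha> * Lf"
  "A_W$3$1 = 0" "A_W$3$2 = 0" "A_W$3$3 = zeta_phi"
  by (simp_all add: Amat_def Let_def)

lemma rhoW_nonneg: "0 \<le> rhoW W"
  unfolding rhoW_def by (rule onorm_pos_le) simp

lemma c_rate_radicand_nonneg: "0 \<le> 1 - 2 * \<alpha> * mf * Lf / (mf + Lf)"
proof -
  have mL: "0 < mf + Lf" using mf_pos Lf_pos by linarith
  have "0 \<le> 2 * mf * Lf / (mf + Lf)"
    using mf_pos Lf_pos mL by (intro divide_nonneg_pos mult_nonneg_nonneg) linarith+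
  with alpha_lt2 have "\<alpha> * (2 * mf * Lf / (mf + Lf)) \<le> (2 / (mf + Lf)) * (2 * mf * Lf / (mf + Lf))"
    by (intro mult_right_mono) (simp_all add: add.commute)
  then have "2 * \<alpha> * mf * Lf / (mf + Lf) \<le> (2 / (mf + Lf)) * (2 * mf * Lf / (mf + Lf))"
    by (simp add: mult_ac)
  also have "\<dots> = 4 * mf * Lf / (mf + Lf)\<^sup>2"
    by (simp add: power2_eq_square)
  also have "\<dots> \<le> 1"
  proof -
    have "4 * mf * Lf \<le> (mf + Lf)\<^sup>2"
      using zero_le_power2[of "mf - Lf"] by (simp add: power2_eq_square algebra_simps)
    then show ?thesis using mL by (simp add: divide_le_eq)
  qed
  finally show ?thesis by simp
qed

lemma c_rate_nonneg: "0 \<le> c_rate"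
  using c_rate_radicand_nonneg by simp

lemma zeta_phi_nonneg: "0 \<le> zeta_phi"
  by (simp add: le_max_iff_disj)

lemma A_W_nonneg: "0 \<le> A_W$i$j"
proof -
  have "\<forall>i j. 0 \<le> A_W$i$j"
    using alpha_pos Lf_pos rhoW_nonneg c_rate_nonneg zeta_phi_nonneg
    unfolding forall_3 A_W_entries by simp
  then show ?thesis by blast
qed

lemma dvec_dpgm_step_le:
  assumes "norm ((mat 1 - W) *v xtilde W \<alpha> f g k) \<le> s"
  shows "dvec W \<alpha> f g k (dpgm_step W \<alpha> f g k e x) $ j
     \<le> (A_W *v dvec W \<alpha> f g k x + (vector [2 * \<alpha> * Lg, 2 * \<alpha> * Lg + s, 0] + norm e *s 1)) $ j"
proof -
  have "j = 1 \<or> j = 2 \<or> j = 3"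
    using exhaust_3 by blast
  then show ?thesis
    using norm_dpgm_step_average_le[of k e x] norm_dpgm_step_disagreement_le[of k e x]
      norm_dpgm_step_minus_xtilde_le[of k e x] assms
    by (auto simp: dvec_def xbar_def matrix_vector_mult_nth sum_3 A_W_entries algebra_simps)
qed

lemma dvec_dpgm_inner_le:
  assumes "norm ((mat 1 - W) *v xtilde W \<alpha> f g k) \<le> s"
  shows "dvec W \<alpha> f g k (dpgm_inner W \<alpha> f g k es x0 n) $ j
     \<le> (mpow A_W n *v dvec W \<alpha> f g k x0
         + (\<Sum>l<n. mpow A_W (n - l - 1) *v (vector [2 * \<alpha> * Lg, 2 * \<alpha> * Lg + s, 0] + norm (es l) *s 1))) $ j"
proof -
  let ?d = "\<lambda>l. dvec W \<alpha> f g k (dpgm_inner W \<alpha> f g k es x0 l)"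
  let ?c = "\<lambda>l. vector [2 * \<alpha> * Lg, 2 * \<alpha> * Lg + s, 0] + norm (es l) *s 1"
  have "?d (Suc l) $ i \<le> (A_W *v ?d l + ?c l) $ i" for l i
    using dvec_dpgm_step_le[OF assms] by simp
  from nonneg_matrix_recursion_le[where d = ?d and c = ?c, OF A_W_nonneg this] show ?thesis
    by simp
qed

lemma c_rate_lt_1: "c_rate < 1"
proof -
  have "0 < 2 * \<alpha> * mf * Lf / (mf + Lf)"
    by (intro divide_pos_pos mult_pos_pos add_pos_pos zero_less_numeral alpha_pos mf_pos Lf_pos)
  then show ?thesis by simp
qed

lemma zeta_phi_lt_1: "zeta_phi < 1"
proof -
  have "\<alpha> * Lf < 1 + lambda_min W"
    using alpha_lt1 Lf_pos by (simp add: pos_less_divide_eq mult.commute)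
  moreover have "\<alpha> * mf < 1"
  proof -
    have "\<alpha> * mf < 2 / (Lf + mf) * mf"
      using mult_strict_right_mono[OF alpha_lt2 mf_pos] .
    also have "\<dots> = (2 * mf) / (Lf + mf)"
      by simp
    also have "\<dots> \<le> 1"
      using mf_le_Lf mf_pos by (subst divide_le_eq_1_pos) linarith+
    finally show ?thesis .
  qed
  ultimately show ?thesis
    using mult_pos_pos[OF alpha_pos Lf_pos] mult_pos_pos[OF alpha_pos mf_pos] lambda_min_W_le_1
    by (simp add: abs_less_iff)
qed

lemma mpow_A_W_eigenvalues_lt_1:
  assumes "1 \<le> n" and "rhoW W < 1"
    and "v \<noteq> 0" and "cmat (mpow A_W n) *v v = \<mu> *s v"
  shows "cmod \<mu> < 1"
proof -
  have "upper_triangular3 A_W"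
    by (simp add: upper_triangular3_def A_W_entries)
  then have tri: "upper_triangular3 (mpow A_W n)" and diag: "\<And>i. mpow A_W n $ i $ i = (A_W $ i $ i)^n"
    using upper_triangular3_mpow by blast+
  obtain i where "\<mu> = complex_of_real ((A_W $ i $ i)^n)"
    using upper_triangular3_eigenvalue[OF tri assms(3,4)] diag by metis
  then have "cmod \<mu> = \<bar>A_W $ i $ i\<bar>^n"
    by (simp add: power_abs norm_power)
  moreover have "\<bar>A_W $ 1 $ 1\<bar> < 1" "\<bar>A_W $ 2 $ 2\<bar> < 1" "\<bar>A_W $ 3 $ 3\<bar> < 1"
    unfolding A_W_entries
    using c_rate_lt_1 c_rate_nonneg zeta_phi_lt_1 zeta_phi_nonneg rhoW_nonneg \<open>rhoW W < 1\<close>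
    by (simp_all only: abs_of_nonneg)
  then have "\<bar>A_W $ i $ i\<bar> < 1"
    using exhaust_3[of i] by auto
  moreover have "\<bar>A_W $ i $ i\<bar>^n \<le> \<bar>A_W $ i $ i\<bar>^1"
    using \<open>1 \<le> n\<close> calculation by (intro power_decreasing) auto
  ultimately show ?thesis
    by simp
qed

lemma dvec_Suc_le:
  assumes "norm (xstar_vec f g (Suc k) - xstar_vec f g k) \<le> \<sigma>"
    and "norm (xtilde W \<alpha> f g (Suc k) - xtilde W \<alpha> f g k) \<le> \<sigma>"
  shows "dvec W \<alpha> f g (Suc k) y $ j \<le> (dvec W \<alpha> f g k y + vector [\<sigma>, 0, \<sigma>]) $ j"
proof -
  have "norm (xbar y - xstar_vec f g (Suc k)) \<le> norm (xbar y - xstar_vec f g k) + \<sigma>"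
    using norm_triangle_ineq4[of "xbar y - xstar_vec f g k" "xstar_vec f g (Suc k) - xstar_vec f g k"]
      assms(1) by simp
  moreover have "norm (y - xtilde W \<alpha> f g (Suc k)) \<le> norm (y - xtilde W \<alpha> f g k) + \<sigma>"
    using norm_triangle_ineq4[of "y - xtilde W \<alpha> f g k" "xtilde W \<alpha> f g (Suc k) - xtilde W \<alpha> f g k"]
      assms(2) by simp
  ultimately show ?thesis
    using exhaust_3[of j] by (auto simp: dvec_def)
qed

lemma norm_minus_xstar_le_dvec:
  "norm (y - xstar_vec f g k) \<le> dvec W \<alpha> f g k y $ 1 + dvec W \<alpha> f g k y $ 2"
  using norm_triangle_ineq[of "xbar y - xstar_vec f g k" "y - xbar y"] by (simp add: dvec_def)

lemma dvec_online_step_le: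
  assumes drift: "norm (xstar_vec f g (Suc k) - xstar_vec f g k) \<le> \<sigma>"
      "norm (xtilde W \<alpha> f g (Suc k) - xtilde W \<alpha> f g k) \<le> \<sigma>"
    and consensus: "norm ((mat 1 - W) *v xtilde W \<alpha> f g (Suc k)) \<le> \<sigma>'"
  shows "dvec W \<alpha> f g (Suc k) (dpgm_inner W \<alpha> f g (Suc k) es x0 Mo) $ j
    \<le> (mpow A_W Mo *v dvec W \<alpha> f g k x0) $ j
      + (mpow A_W Mo *v vector [\<sigma>, 0, \<sigma>]
         + (\<Sum>l<Mo. mpow A_W (Mo - l - 1) *v vector [2 * \<alpha> * Lg, 2 * \<alpha> * Lg + \<sigma>', 0])) $ j
      + (\<Sum>l<Mo. norm (es l) * (mpow A_W (Mo - l - 1) *v 1) $ j)"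
proof -
  have "(mpow A_W Mo *v dvec W \<alpha> f g (Suc k) x0) $ j
      \<le> (mpow A_W Mo *v (dvec W \<alpha> f g k x0 + vector [\<sigma>, 0, \<sigma>])) $ j"
    by (rule matrix_vector_mult_mono[OF mpow_nonneg[OF A_W_nonneg] dvec_Suc_le[OF drift]])
  with dvec_dpgm_inner_le[OF consensus, of es x0 Mo j] show ?thesis
    by (simp add: matrix_vector_right_distrib scalar_mult_eq_scaleR matrix_vector_mult_scaleR
        sum.distrib algebra_simps)
qed

lemma online_dpgm_expected_error:
  fixes M :: "'a measure" and x :: "nat \<Rightarrow> 'a \<Rightarrow> real^'n" and e :: "nat \<Rightarrow> nat \<Rightarrow> 'a \<Rightarrow> real^'n"
  assumes "prob_space M"
    and e_int: "\<And>l. integrable M (\<lambda>\<omega>. norm (e k l \<omega>))"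
    and e_bound: "\<And>l. (\<integral>\<omega>. norm (e k l \<omega>) \<partial>M) \<le> \<eta>"
    and x_rec: "\<And>\<omega>. x (Suc k) \<omega> = dpgm_inner W \<alpha> f g (Suc k) (\<lambda>l. e k l \<omega>) (x k \<omega>) Mo"
    and drift: "norm (xstar_vec f g (Suc k) - xstar_vec f g k) \<le> \<sigma>"
      "norm (xtilde W \<alpha> f g (Suc k) - xtilde W \<alpha> f g k) \<le> \<sigma>"
    and consensus: "norm ((mat 1 - W) *v xtilde W \<alpha> f g (Suc k)) \<le> \<sigma>'"
    and int_k: "\<And>j. integrable M (\<lambda>\<omega>. dvec W \<alpha> f g k (x k \<omega>) $ j)"
    and int_Suc_k: "\<And>j. integrable M (\<lambda>\<omega>. dvec W \<alpha> f g (Suc k) (x (Suc k) \<omega>) $ j)"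
  shows "(\<integral>\<omega>. dvec W \<alpha> f g (Suc k) (x (Suc k) \<omega>) $ j \<partial>M)
      \<le> (mpow A_W Mo *v (\<chi> j. \<integral>\<omega>. dvec W \<alpha> f g k (x k \<omega>) $ j \<partial>M)
         + ((\<Sum>l<Mo. mpow A_W (Mo - l - 1) *v
              (vector [2 * \<alpha> * Lg, 2 * \<alpha> * Lg + \<sigma>', 0] + \<eta> *s (1::real^3)))
           + mpow A_W Mo *v vector [\<sigma>, 0, \<sigma>])) $ j" (is "?lhs \<le> ?rhs")
    and "(\<integral>\<omega>. norm (x (Suc k) \<omega> - xstar_vec f g (Suc k)) \<partial>M)
      \<le> (\<integral>\<omega>. dvec W \<alpha> f g (Suc k) (x (Suc k) \<omega>) $ 1 \<partial>M)
        + (\<integral>\<omega>. dvec W \<alpha> f g (Suc k) (x (Suc k) \<omega>) $ 2 \<partial>M)"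
proof -
  interpret prob_space M by fact
  have bound: "dvec W \<alpha> f g (Suc k) (x (Suc k) \<omega>) $ j
      \<le> (mpow A_W Mo *v dvec W \<alpha> f g k (x k \<omega>)) $ j
        + (mpow A_W Mo *v vector [\<sigma>, 0, \<sigma>]
           + (\<Sum>l<Mo. mpow A_W (Mo - l - 1) *v vector [2 * \<alpha> * Lg, 2 * \<alpha> * Lg + \<sigma>', 0])) $ j
        + (\<Sum>l<Mo. norm (e k l \<omega>) * (mpow A_W (Mo - l - 1) *v 1) $ j)" for \<omega>
    unfolding x_rec by (rule dvec_online_step_le[OF drift consensus])
  have "expectation (\<lambda>\<omega>. dvec W \<alpha> f g (Suc k) (x (Suc k) \<omega>) $ j)
      \<le> (mpow A_W Mo *v (\<chi> i. expectation (\<lambda>\<omega>. dvec W \<alpha> f g k (x k \<omega>) $ i))) $ j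
        + (mpow A_W Mo *v vector [\<sigma>, 0, \<sigma>]
           + (\<Sum>l<Mo. mpow A_W (Mo - l - 1) *v vector [2 * \<alpha> * Lg, 2 * \<alpha> * Lg + \<sigma>', 0])) $ j
        + (\<Sum>l<Mo. \<eta> * (mpow A_W (Mo - l - 1) *v 1) $ j)"
    by (rule expectation_le_nonneg_linear_bound[OF int_k int_Suc_k _ _ e_int e_bound bound])
      (simp_all add: matrix_vector_mult_nth mpow_nonneg[OF A_W_nonneg] sum_nonneg)
  then show "?lhs \<le> ?rhs"
    by (simp add: matrix_vector_right_distrib scalar_mult_eq_scaleR matrix_vector_mult_scaleR
        sum.distrib algebra_simps)
  have "(\<integral>\<omega>. norm (x (Suc k) \<omega> - xstar_vec f g (Suc k)) \<partial>M)
      \<le> (\<integral>\<omega>. dvec W \<alpha> f g (Suc k) (x (Suc k) \<omega>) $ 1 + dvec W \<alpha> f g (Suc k) (x (Suc k) \<omega>) $ 2 \<partial>M)"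
    by (rule integral_mono'[OF Bochner_Integration.integrable_add[OF int_Suc_k int_Suc_k]])
      (use norm_minus_xstar_le_dvec in \<open>auto simp: dvec_def\<close>)
  also have "\<dots> = (\<integral>\<omega>. dvec W \<alpha> f g (Suc k) (x (Suc k) \<omega>) $ 1 \<partial>M)
      + (\<integral>\<omega>. dvec W \<alpha> f g (Suc k) (x (Suc k) \<omega>) $ 2 \<partial>M)"
    by (rule Bochner_Integration.integral_add[OF int_Suc_k int_Suc_k])
  finally show "(\<integral>\<omega>. norm (x (Suc k) \<omega> - xstar_vec f g (Suc k)) \<partial>M)
      \<le> (\<integral>\<omega>. dvec W \<alpha> f g (Suc k) (x (Suc k) \<omega>) $ 1 \<partial>M)
        + (\<integral>\<omega>. dvec W \<alpha> f g (Suc k) (x (Suc k) \<omega>) $ 2 \<partial>M)" .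
qed

end

theorem proposition2:
  fixes W :: "real^'n^'n"
    and E :: "'n \<Rightarrow> 'n \<Rightarrow> bool"
    and f g :: "nat \<Rightarrow> 'n \<Rightarrow> real \<Rightarrow> real"
    and Lfi mfi :: "'n \<Rightarrow> real"
    and Lg \<alpha> \<sigma> \<sigma>' \<eta> :: real
    and Mo :: nat
    and M :: "'a measure"
    and x :: "nat \<Rightarrow> 'a \<Rightarrow> real^'n"
    and e :: "nat \<Rightarrow> nat \<Rightarrow> 'a \<Rightarrow> real^'n"
  defines "Lf \<equiv> Max (range Lfi)"
    and "mf \<equiv> Min (range mfi)"
    and "A \<equiv> Amat \<alpha> (Max (range Lfi)) (Min (range mfi)) (rhoW W) (lambda_min W)"
  assumes N2: "CARD('n) \<ge> 2"
    and E_sym: "\<And>i j. E i j \<Longrightarrow> E j i"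
    and E_conn: "\<And>i j. E\<^sup>*\<^sup>* i j"
    and W_sym: "transpose W = W"
    and W_nonneg: "\<And>i j. W $ i $ j \<ge> 0"
    and W_rows: "\<And>i. (\<Sum>j\<in>UNIV. W $ i $ j) = 1"
    and W_cols: "\<And>j. (\<Sum>i\<in>UNIV. W $ i $ j) = 1"
    and W_graph: "\<And>i j. i \<noteq> j \<Longrightarrow> \<not> E i j \<Longrightarrow> W $ i $ j = 0"
    and rho_pos: "0 < rhoW W" and rho_lt1: "rhoW W < 1"
    and mfi_pos: "\<And>i. mfi i > 0"
    and f_diff: "\<And>k i y. f k i differentiable (at y)"
    and f_smooth: "\<And>k i y z. \<bar>deriv (f k i) y - deriv (f k i) z\<bar> \<le> Lfi i * \<bar>y - z\<bar>"
    and f_strong: "\<And>k i. convex_on UNIV (\<lambda>y. f k i y - mfi i / 2 * y\<^sup>2)"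
    \<comment> \<open>real-valued, hence closed and proper\<close>
    and g_convex: "\<And>k i. convex_on UNIV (g k i)"
    and g_lip: "\<And>i. \<exists>C. \<forall>k. C-lipschitz_on UNIV (g k i)"
    and Lg_nonneg: "Lg \<ge> 0"
    and Lg_lip: "\<And>k. Lg-lipschitz_on UNIV (gsum g k)"
    and alpha_pos: "0 < \<alpha>"
    and alpha_lt1: "\<alpha> < (1 + lambda_min W) / Lf"
    and alpha_lt2: "\<alpha> < 2 / (Lf + mf)"
    and sigma_nonneg: "\<sigma> \<ge> 0"
    and drift_star: "\<And>k. norm (xstar_vec f g (Suc k) - xstar_vec f g k) \<le> \<sigma>"
    and drift_tilde: "\<And>k. norm (xtilde W \<alpha> f g (Suc k) - xtilde W \<alpha> f g k) \<le> \<sigma>"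
    and sigma'_bdd: "bdd_above (range (\<lambda>k. norm ((mat 1 - W) *v xtilde W \<alpha> f g k)))"
    and sigma'_def: "\<sigma>' = (SUP k. norm ((mat 1 - W) *v xtilde W \<alpha> f g k))"
    and Mo_pos: "Mo \<ge> 1"
    and P: "prob_space M"
    and e_rv: "\<And>k l. e k l \<in> borel_measurable M"
    and e_int: "\<And>k l. integrable M (\<lambda>\<omega>. norm (e k l \<omega>))"
    and e_bound: "\<And>k l. (\<integral>\<omega>. norm (e k l \<omega>) \<partial>M) \<le> \<eta>"
    and x_rec: "\<And>k \<omega>. x (Suc k) \<omega> = dpgm_inner W \<alpha> f g (Suc k) (\<lambda>l. e k l \<omega>) (x k \<omega>) Mo"
  shows "(\<forall>k. (\<forall>j. integrable M (\<lambda>\<omega>. dvec W \<alpha> f g k (x k \<omega>) $ j))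
              \<and> (\<forall>j. integrable M (\<lambda>\<omega>. dvec W \<alpha> f g (Suc k) (x (Suc k) \<omega>) $ j)) \<longrightarrow>
           (let Ed = (\<lambda>m. \<chi> j. \<integral>\<omega>. dvec W \<alpha> f g m (x m \<omega>) $ j \<partial>M);
                b'' = (\<Sum>l<Mo. mpow A (Mo - l - 1) *v
                          (vector [2 * \<alpha> * Lg, 2 * \<alpha> * Lg + \<sigma>', 0] + \<eta> *s (1::real^3)))
                      + mpow A Mo *v vector [\<sigma>, 0, \<sigma>]
            in (\<forall>j. Ed (Suc k) $ j \<le> (mpow A Mo *v Ed k + b'') $ j)
               \<and> (\<integral>\<omega>. norm (x (Suc k) \<omega> - xstar_vec f g (Suc k)) \<partial>M)
                   \<le> Ed (Suc k) $ 1 + Ed (Suc k) $ 2))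
       \<and> (\<forall>(\<mu>::complex) (v::complex^3). v \<noteq> 0 \<and> cmat (mpow A Mo) *v v = \<mu> *s v \<longrightarrow> cmod \<mu> < 1)"
proof -
  interpret dpgm_stepsize W f g Lfi mfi Lg \<alpha>
    using W_sym W_nonneg W_rows W_cols mfi_pos f_diff f_smooth f_strong g_convex g_lip Lg_nonneg
      Lg_lip alpha_pos alpha_lt1 alpha_lt2
    by unfold_locales (simp_all add: Lf_def mf_def)
  have consensus: "norm ((mat 1 - W) *v xtilde W \<alpha> f g k) \<le> \<sigma>'" for k
    unfolding sigma'_def by (rule cSUP_upper[OF _ sigma'_bdd]) simp
  show ?thesis
    unfolding A_def Let_def
    apply (intro conjI allI impI; elim conjE)
    subgoal
      unfolding vec_lambda_beta
      by (rule online_dpgm_expected_error(1)[OF P e_int e_bound x_rec drift_star drift_tilde consensus])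
        auto
    subgoal
      unfolding vec_lambda_beta
      by (rule online_dpgm_expected_error(2)[OF P e_int e_bound x_rec drift_star drift_tilde consensus])
        auto
    subgoal
      by (rule mpow_A_W_eigenvalues_lt_1[OF Mo_pos rho_lt1]) auto
    done
qed

end
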